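(* For every subsemigroup $D$ of $(\mathbb{N}_0,+)$, the set $\mathcal I_D$ is a category of partitions.
   Context: A (two-colored) partition $p$ consists of two finite totally ordered sets $U$ (upper row, ordered left to right) and $L$ (lower row), a decomposition of the disjoint union $U\sqcup L$ (the points of $p$) into non-empty pairwise disjoint subsets (blocks), and a coloring of every point by white $\circ$ or black $\bullet$. A pair partition is one all of whose blocks have exactly two points. Operations: the tensor product $p\otimes p'$ appends each row of $p'$ to the right of the corresponding row of $p$; the involution $p^*$ exchanges upper and lower row; if the lower row of $p'$ and the upper row of $p$ agree in length and coloring, the composition $pp'$ is obtained by placing $p'$ on top of $p$, identifying the lower row of $p'$ with the upper row of $p$, taking the upper row of $p'$ as upper row and the lower row of $p$ as lower row, and declaring two remaining points to lie in the same block iff they are connected through blocks of $p$ and $p'$ via the identified middle points (components lying entirely in the middle are discarded). A category of partitions is a set of partitions closed under tensor products, compositions (whenever defined) and involution, and containing the two partitions with one upper and one lower point, both of the same color $c\in\{\circ,\bullet\}$, forming one block, and the two partitions with empty upper row and lower row $\circ\bullet$ resp. $\bullet\circ$ whose two points form one block. Cyclic order and color sum: on the points of $p$ consider the cyclic order obtained by traversing the lower row from left to right, then the upper row from right to left, then returning to the leftmost lower point. For points $\alpha,\beta$, $]\alpha,\beta[$ denotes the set of points strictly after $\alpha$ and strictly before $\beta$ in this cyclic order, and $]\alpha,\beta]:=]\alpha,\beta[\cup\{\beta\}$ if $\alpha\ne\beta$, $]\alpha,\alpha]:=\emptyset$. The normalized color of a lower point is its color, that of an upper point the opposite color. For a set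 $S$ of points, $\sigma_p(S)$ is the number of points of normalized color $\circ$ in $S$ minus the number of points of normalized color $\bullet$ in $S$. Two distinct blocks $B,B'$ cross if there are points $\alpha,\beta\in B$, $\gamma,\delta\in B'$ occurring in the cyclic order in the order $\alpha,\gamma,\beta,\delta$. $\mathcal P^{\circ\bullet}_{2,\mathrm{nb}}$ is the set of pair partitions each of whose blocks contains one point of normalized color $\circ$ and one of normalized color $\bullet$. $\mathcal S_0$ is the set of $p\in\mathcal P^{\circ\bullet}_{2,\mathrm{nb}}$ such that $\sigma_p(]\alpha,\beta[)=0$ for every block $\{\alpha,\beta\}$ of $p$. For $p\in\mathcal S_0$ and points $\alpha,\beta$ put $\delta_p(\alpha,\beta)=\sigma_p(]\alpha,\beta[)$ if $\alpha,\beta$ have different normalized colors and $\delta_p(\alpha,\beta)=\sigma_p(]\alpha,\beta])$ otherwise; for blocks $B,B'$ of $p\in\mathcal S_0$ the value $\delta_p(\alpha,\alpha')$ is independent of the choice $\alpha\in B,\alpha'\in B'$, and $d_p(B,B'):=|\delta_p(\alpha,\alpha')|$. A subsemigroup of $(\mathbb N_0,+)$ is a (possibly empty) subset closed under addition. For such $D$, $\mathcal I_D$ is the set of all $p\in\mathcal S_0$ such that $d_p(B,B')\notin D$ for all pairs of crossing blocks $B,B'$ of $p$. *)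

theory Defs
  imports "HOL-Library.Disjoint_Sets"
begin

text \<open>Colors: W = white (circ), B = black (bullet).\<close>
datatype color = W | B

fun opp :: "color \<Rightarrow> color" where
  "opp W = B" | "opp B = W"

text \<open>Points: Up i is the i-th upper point (0-based, left to right),
  Lo j the j-th lower point.\<close>
datatype pt = Up nat | Lo nat

record ptn =
  ucol :: "color list"
  lcol :: "color list"
  blocks :: "pt set set"

definition points :: "ptn \<Rightarrow> pt set" where
  "points p = {Up i | i. i < length (ucol p)} \<union> {Lo j | j. j < length (lcol p)}"

definition is_partition :: "ptn \<Rightarrow> bool" where
  "is_partition p \<longleftrightarrow> partition_on (points p) (blocks p)"

definition is_pair_partition :: "ptn \<Rightarrow> bool" where
  "is_pair_partition p \<longleftrightarrow> is_partition p \<and> (\<forall>K\<in>blocks p. card K = 2)"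

fun shift :: "nat \<Rightarrow> nat \<Rightarrow> pt \<Rightarrow> pt" where
  "shift k l (Up i) = Up (i + k)"
| "shift k l (Lo j) = Lo (j + l)"

definition tensor :: "ptn \<Rightarrow> ptn \<Rightarrow> ptn" where
  "tensor p q = \<lparr> ucol = ucol p @ ucol q, lcol = lcol p @ lcol q,
     blocks = blocks p \<union> (image (shift (length (ucol p)) (length (lcol p)))) ` blocks q \<rparr>"

fun swap_pt :: "pt \<Rightarrow> pt" where
  "swap_pt (Up i) = Lo i"
| "swap_pt (Lo j) = Up j"

definition invol :: "ptn \<Rightarrow> ptn" where
  "invol p = \<lparr> ucol = lcol p, lcol = ucol p, blocks = (image swap_pt) ` blocks p \<rparr>"

text \<open>Composition p q (written p p' in the paper, with q = p' placed on top of p):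
  points of the stacked picture are T i (upper row of q), M j (the identified middle
  row = lower row of q = upper row of p), Bt j (lower row of p).\<close>
datatype cpt = T nat | M nat | Bt nat

fun top_emb :: "pt \<Rightarrow> cpt" where
  "top_emb (Up i) = T i"
| "top_emb (Lo j) = M j"

fun bot_emb :: "pt \<Rightarrow> cpt" where
  "bot_emb (Up i) = M i"
| "bot_emb (Lo j) = Bt j"

fun from_outer :: "cpt \<Rightarrow> pt" where
  "from_outer (T i) = Up i"
| "from_outer (Bt j) = Lo j"
| "from_outer (M j) = Up j" (* never used: middle points are discarded *)

definition comp_rel :: "ptn \<Rightarrow> ptn \<Rightarrow> (cpt \<times> cpt) set" where
  "comp_rel p q =
     {(top_emb x, top_emb y) | x y. \<exists>K\<in>blocks q. x \<in> K \<and> y \<in> K}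
   \<union> {(bot_emb x, bot_emb y) | x y. \<exists>K\<in>blocks p. x \<in> K \<and> y \<in> K}"

definition outer_pts :: "ptn \<Rightarrow> ptn \<Rightarrow> cpt set" where
  "outer_pts p q = {T i | i. i < length (ucol q)} \<union> {Bt j | j. j < length (lcol p)}"

definition comp :: "ptn \<Rightarrow> ptn \<Rightarrow> ptn" where
  "comp p q = \<lparr> ucol = ucol q, lcol = lcol p,
     blocks = {from_outer ` ({y. (x, y) \<in> (comp_rel p q)\<^sup>*} \<inter> outer_pts p q) | x. x \<in> outer_pts p q} \<rparr>"

definition id_part :: "color \<Rightarrow> ptn" where
  "id_part c = \<lparr> ucol = [c], lcol = [c], blocks = {{Up 0, Lo 0}} \<rparr>"

definition pair_part :: "color \<Rightarrow> color \<Rightarrow> ptn" where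
  "pair_part c d = \<lparr> ucol = [], lcol = [c, d], blocks = {{Lo 0, Lo 1}} \<rparr>"

definition category_of_partitions :: "ptn set \<Rightarrow> bool" where
  "category_of_partitions C \<longleftrightarrow>
     (\<forall>p\<in>C. is_partition p)
   \<and> (\<forall>p\<in>C. \<forall>q\<in>C. tensor p q \<in> C)
   \<and> (\<forall>p\<in>C. \<forall>q\<in>C. lcol q = ucol p \<longrightarrow> comp p q \<in> C)
   \<and> (\<forall>p\<in>C. invol p \<in> C)
   \<and> id_part W \<in> C \<and> id_part B \<in> C
   \<and> pair_part W B \<in> C \<and> pair_part B W \<in> C"

text \<open>Position in the cyclic order: lower row left to right, then upper row right to left.\<close>
fun pos :: "ptn \<Rightarrow> pt \<Rightarrow> nat" where
  "pos p (Lo j) = j"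
| "pos p (Up i) = length (lcol p) + (length (ucol p) - 1 - i)"

definition cyc_between :: "nat \<Rightarrow> nat \<Rightarrow> nat \<Rightarrow> bool" where
  "cyc_between a b c \<longleftrightarrow> (if a < b then a < c \<and> c < b else a < c \<or> c < b)"

definition oi :: "ptn \<Rightarrow> pt \<Rightarrow> pt \<Rightarrow> pt set" where
  "oi p a b = {c \<in> points p. cyc_between (pos p a) (pos p b) (pos p c)}"

definition hoi :: "ptn \<Rightarrow> pt \<Rightarrow> pt \<Rightarrow> pt set" where
  "hoi p a b = (if a = b then {} else oi p a b \<union> {b})"

fun ncol :: "ptn \<Rightarrow> pt \<Rightarrow> color" where
  "ncol p (Lo j) = lcol p ! j"
| "ncol p (Up i) = opp (ucol p ! i)"

definition sigma :: "ptn \<Rightarrow> pt set \<Rightarrow> int" where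
  "sigma p S = int (card {x \<in> S. ncol p x = W}) - int (card {x \<in> S. ncol p x = B})"

definition crossing :: "ptn \<Rightarrow> pt set \<Rightarrow> pt set \<Rightarrow> bool" where
  "crossing p K K' \<longleftrightarrow> K \<noteq> K' \<and>
     (\<exists>a b c d. a \<in> K \<and> b \<in> K \<and> c \<in> K' \<and> d \<in> K' \<and> a \<noteq> b
        \<and> c \<in> oi p a b \<and> d \<in> oi p b a)"

definition P2nb :: "ptn set" where
  "P2nb = {p. is_pair_partition p \<and>
     (\<forall>K\<in>blocks p. \<exists>a\<in>K. \<exists>b\<in>K. ncol p a = W \<and> ncol p b = B)}"

definition S0 :: "ptn set" where
  "S0 = {p \<in> P2nb. \<forall>K\<in>blocks p. \<forall>a\<in>K. \<forall>b\<in>K. a \<noteq> b \<longrightarrow> sigma p (oi p a b) = 0}"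

definition delta :: "ptn \<Rightarrow> pt \<Rightarrow> pt \<Rightarrow> int" where
  "delta p a b = (if ncol p a \<noteq> ncol p b then sigma p (oi p a b) else sigma p (hoi p a b))"

text \<open>d_p(K,K') = |delta_p(a,a')| for (any, here a chosen) a in K, a' in K'.\<close>
definition dist_bl :: "ptn \<Rightarrow> pt set \<Rightarrow> pt set \<Rightarrow> nat" where
  "dist_bl p K K' = nat \<bar>delta p (SOME a. a \<in> K) (SOME a'. a' \<in> K')\<bar>"

definition subsemigroup :: "nat set \<Rightarrow> bool" where
  "subsemigroup D \<longleftrightarrow> (\<forall>a\<in>D. \<forall>b\<in>D. a + b \<in> D)"

definition I_D :: "nat set \<Rightarrow> ptn set" where
  "I_D D = {p \<in> S0. \<forall>K\<in>blocks p. \<forall>K'\<in>blocks p. crossing p K K' \<longrightarrow> dist_bl p K K' \<notin> D}"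

end

theory Submission
  imports Defs
begin

text \<open>
  Give every point of a partition a \<^emph>\<open>level\<close>: the color sum of the points preceding it in its
  row, lowered by one at black points. When both rows have the same color sum, \<open>\<delta>\<^sub>p(\<alpha>, \<beta>)\<close> is
  the level difference of \<open>\<beta>\<close> and \<open>\<alpha>\<close>. So \<open>\<S>\<^sub>0\<close> consists of the pair partitions whose blocks
  join points of opposite normalized color and equal level, \<open>d\<^sub>p(B, B')\<close> is the difference of
  the levels of the two blocks, and two pair blocks cross iff an odd number of the four pairs
  \<open>(u, v) \<in> B \<times> B'\<close> has \<open>u\<close> before \<open>v\<close> in the cyclic order.

  The involution reverses the cyclic order and keeps levels. The tensor product shifts the levels
  of the right factor by a constant and places it in an interval of the cyclic order, so its
  blocks cannot cross those of the left factor. In a composition, levels are constant along the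
  connected components of the stacked picture; counting vertices against edges, every component
  meets the outer rows in two points, necessarily of opposite colors, and a parity count shows
  that whenever two blocks of the composite cross, some blocks of one factor lying in the same two
  components cross. Hence the distances of crossing blocks of the composite are distances of
  crossing blocks of the factors. The argument never uses that \<open>D\<close> is closed under addition.
\<close>

section \<open>Pair counts and graph components\<close>

lemma finite_if_card_eq_2: "card e = 2 \<Longrightarrow> finite e"
  by (rule card_ge_0_finite) simp

lemma card_2_eq_doubleton: "card S = 2 \<Longrightarrow> u \<in> S \<Longrightarrow> v \<in> S \<Longrightarrow> u \<noteq> v \<Longrightarrow> S = {u, v}"
  unfolding card_2_iff by auto

lemma card_Union_pairs:
  assumes "finite E" "disjoint E" "\<forall>e\<in>E. card e = 2"
  shows "card (\<Union>E) = 2 * card E"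
proof -
  have "\<forall>e\<in>E. finite e" using assms(3) finite_if_card_eq_2 by blast
  then have "card (\<Union>E) = (\<Sum>e\<in>E. card e)"
    using assms(1,2) by (intro card_Union_disjoint) (auto simp: disjoint_def)
  then show ?thesis using assms(3) by simp
qed

lemma partition_on_inj_image_nonempty:
  assumes "partition_on A P" "inj_on f A"
  shows "partition_on (f ` A) ((`) f ` P)"
proof -
  have "(`) f ` P - {{}} = (`) f ` P" using partition_onD3[OF assms(1)] by auto
  then show ?thesis using partition_on_inj_image[OF assms] by simp
qed

lemma partition_on_Un:
  assumes "partition_on X P" "partition_on Y Q" "X \<inter> Y = {}"
  shows "partition_on (X \<union> Y) (P \<union> Q)"
proof -
  have "disjoint (P \<union> Q)"
    using assms by (intro disjoint_union) (auto simp: partition_on_def)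
  then show ?thesis using assms by (auto simp: partition_on_def)
qed

lemma odd_sumE:
  assumes "odd (sum g X :: nat)"
  obtains x where "x \<in> X" "odd (g x)"
  using assms by (metis dvd_sum)

definition pair_count :: "('a \<Rightarrow> 'b \<Rightarrow> bool) \<Rightarrow> 'a set \<Rightarrow> 'b set \<Rightarrow> nat" where
  "pair_count R X Y = (\<Sum>u\<in>X. \<Sum>v\<in>Y. of_bool (R u v))"

lemma pair_count_doubletons:
  "a \<noteq> b \<Longrightarrow> c \<noteq> d \<Longrightarrow> pair_count R {a, b} {c, d} =
    of_bool (R a c) + of_bool (R a d) + of_bool (R b c) + of_bool (R b d)"
  by (simp add: pair_count_def del: sum_of_bool_eq)

lemma pair_count_image_left:
  "inj_on f X \<Longrightarrow> pair_count R (f ` X) Y = pair_count (\<lambda>u v. R (f u) v) X Y"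
  unfolding pair_count_def by (simp add: sum.reindex del: sum_of_bool_eq)

lemma pair_count_image_right:
  "inj_on g Y \<Longrightarrow> pair_count R X (g ` Y) = pair_count (\<lambda>u v. R u (g v)) X Y"
  unfolding pair_count_def by (simp add: sum.reindex del: sum_of_bool_eq)

lemma pair_count_cong:
  "(\<And>u v. u \<in> X \<Longrightarrow> v \<in> Y \<Longrightarrow> R u v \<longleftrightarrow> S u v) \<Longrightarrow> pair_count R X Y = pair_count S X Y"
  unfolding pair_count_def by (intro sum.cong) auto

lemma pair_count_complement:
  assumes "\<And>u v. u \<in> X \<Longrightarrow> v \<in> Y \<Longrightarrow> R u v \<longleftrightarrow> \<not> S u v"
  shows "pair_count R X Y + pair_count S X Y = card X * card Y"
proof -
  have "pair_count R X Y + pair_count S X Y = (\<Sum>u\<in>X. \<Sum>v\<in>Y. of_bool (R u v) + of_bool (S u v))"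
    unfolding pair_count_def by (simp add: sum.distrib del: sum_of_bool_eq)
  also have "\<dots> = (\<Sum>u\<in>X. \<Sum>v\<in>Y. 1)"
    using assms by (intro sum.cong) auto
  finally show ?thesis by simp
qed

lemma pair_count_all: "(\<And>u v. u \<in> X \<Longrightarrow> v \<in> Y \<Longrightarrow> R u v) \<Longrightarrow> pair_count R X Y = card X * card Y"
  unfolding pair_count_def by simp

lemma pair_count_none: "(\<And>u v. u \<in> X \<Longrightarrow> v \<in> Y \<Longrightarrow> \<not> R u v) \<Longrightarrow> pair_count R X Y = 0"
  unfolding pair_count_def by simp

lemma even_pair_count_left:
  assumes "card Y = 2" "\<And>u v. u \<in> X \<Longrightarrow> v \<in> Y \<Longrightarrow> R u v \<longleftrightarrow> P u"
  shows "even (pair_count R X Y)"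
proof -
  have "pair_count R X Y = (\<Sum>u\<in>X. 2 * of_bool (P u))"
    using assms unfolding pair_count_def by (intro sum.cong) auto
  then show ?thesis by (simp add: sum_distrib_left[symmetric] del: sum_of_bool_eq)
qed

lemma even_pair_count_right:
  assumes "card X = 2" "\<And>u v. u \<in> X \<Longrightarrow> v \<in> Y \<Longrightarrow> R u v \<longleftrightarrow> P v"
  shows "even (pair_count R X Y)"
proof -
  have "pair_count R X Y = (\<Sum>u\<in>X. pair_count (\<lambda>v _. P v) Y {()})"
    using assms unfolding pair_count_def by (intro sum.cong) (auto simp del: sum_of_bool_eq)
  then show ?thesis using assms(1) by simp
qed

lemma pair_count_Un:
  assumes "finite X1" "finite X2" "finite Y1" "finite Y2" "X1 \<inter> X2 = {}" "Y1 \<inter> Y2 = {}"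
  shows "pair_count R (X1 \<union> X2) (Y1 \<union> Y2) =
    pair_count R X1 Y1 + pair_count R X1 Y2 + pair_count R X2 Y1 + pair_count R X2 Y2"
  using assms unfolding pair_count_def
  by (simp add: sum.union_disjoint sum.distrib del: sum_of_bool_eq)

lemma pair_count_Union:
  assumes "finite E1" "finite E2" "disjoint E1" "disjoint E2" "\<forall>e\<in>E1 \<union> E2. finite e"
  shows "pair_count R (\<Union>E1) (\<Union>E2) = (\<Sum>e\<in>E1. \<Sum>f\<in>E2. pair_count R e f)"
proof -
  have "pair_count R (\<Union>E1) (\<Union>E2) = (\<Sum>e\<in>E1. \<Sum>u\<in>e. \<Sum>v\<in>\<Union>E2. of_bool (R u v))"
    unfolding pair_count_def using assms
    by (subst sum.Union_disjoint) (auto simp: disjoint_def simp del: sum_of_bool_eq)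
  also have "\<dots> = (\<Sum>e\<in>E1. \<Sum>u\<in>e. \<Sum>f\<in>E2. \<Sum>v\<in>f. of_bool (R u v))"
    using assms by (subst sum.Union_disjoint) (auto simp: disjoint_def simp del: sum_of_bool_eq)
  also have "\<dots> = (\<Sum>e\<in>E1. \<Sum>f\<in>E2. pair_count R e f)"
    unfolding pair_count_def by (subst sum.swap) simp
  finally show ?thesis .
qed

lemma odd_pair_count_UnionE:
  assumes "finite E1" "finite E2" "disjoint E1" "disjoint E2" "\<forall>e\<in>E1 \<union> E2. finite e"
    and "odd (pair_count R (\<Union>E1) (\<Union>E2))"
  obtains e f where "e \<in> E1" "f \<in> E2" "odd (pair_count R e f)"
  using assms(6) unfolding pair_count_Union[OF assms(1-5)]
  by (metis odd_sumE)

definition edge_rel :: "'a set set \<Rightarrow> ('a \<times> 'a) set" where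
  "edge_rel F = {(u, v). \<exists>e\<in>F. u \<in> e \<and> v \<in> e}"

lemma sym_edge_rel: "sym (edge_rel F)"
  unfolding edge_rel_def sym_def by blast

lemma card_le_card_edges_if_descending:
  fixes d :: "'a \<Rightarrow> nat"
  assumes fin: "finite F" and two: "\<forall>e\<in>F. card e = 2"
    and descend: "\<And>v. v \<in> C - {x} \<Longrightarrow> \<exists>e\<in>F. e \<subseteq> C \<and> v \<in> e \<and> (\<exists>u\<in>e. d u < d v)"
  shows "card (C - {x}) \<le> card {e\<in>F. e \<subseteq> C}"
proof -
  define closer where "closer v e \<longleftrightarrow> e \<in> F \<and> e \<subseteq> C \<and> v \<in> e \<and> (\<exists>u\<in>e. d u < d v)" for v e
  have closer: "closer v (SOME e. closer v e)" if "v \<in> C - {x}" for v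
  proof -
    have "\<exists>e. closer v e" using descend[OF that] unfolding closer_def by blast
    then show ?thesis by (rule someI_ex)
  qed
  have "inj_on (\<lambda>v. SOME e. closer v e) (C - {x})"
  proof (rule inj_onI)
    fix v w assume v: "v \<in> C - {x}" and w: "w \<in> C - {x}"
      and same: "(SOME e. closer v e) = (SOME e. closer w e)"
    define e where "e = (SOME e. closer v e)"
    have ev: "closer v e" and ew: "closer w e"
      using closer[OF v] closer[OF w] same unfolding e_def by simp_all
    show "v = w"
    proof (rule ccontr)
      assume "v \<noteq> w"
      have "card e = 2" "v \<in> e" "w \<in> e" using ev ew two unfolding closer_def by auto
      from this \<open>v \<noteq> w\<close> have "e = {v, w}" by (rule card_2_eq_doubleton)
      then have "d w < d v" and "d v < d w"
        using ev ew unfolding closer_def by auto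
      then show False by simp
    qed
  qed
  moreover have "(\<lambda>v. SOME e. closer v e) ` (C - {x}) \<subseteq> {e\<in>F. e \<subseteq> C}"
    using closer unfolding closer_def by blast
  ultimately show ?thesis using fin by (intro card_inj_on_le) auto
qed

text \<open>A connected graph whose edges are \<open>2\<close>-sets has at most one vertex more than edges: mapping
  each vertex \<open>v \<noteq> x\<close> to an edge through \<open>v\<close> that leads closer to \<open>x\<close> is injective.\<close>
lemma card_component_le_edges:
  fixes F :: "'a set set" and x :: 'a
  assumes fin: "finite F" and two: "\<forall>e\<in>F. card e = 2"
  defines "C \<equiv> {y. (x, y) \<in> (edge_rel F)\<^sup>*}"
  shows "card C \<le> card {e\<in>F. e \<subseteq> C} + 1"
proof -
  let ?R = "edge_rel F"
  define dist where "dist v = (LEAST n. (x, v) \<in> ?R ^^ n)" for v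
  have dist: "(x, v) \<in> ?R ^^ dist v" if "v \<in> C" for v
    using that unfolding C_def dist_def by (meson LeastI_ex mem_Collect_eq rtrancl_power)
  have dist_le: "(x, v) \<in> ?R ^^ n \<Longrightarrow> dist v \<le> n" for v n
    unfolding dist_def by (rule Least_le)
  have edge_closed: "e \<subseteq> C" if "e \<in> F" "v \<in> e" "v \<in> C" for e v
    using that unfolding C_def edge_rel_def by (auto intro: rtrancl_into_rtrancl)
  have "card (C - {x}) \<le> card {e\<in>F. e \<subseteq> C}"
  proof (rule card_le_card_edges_if_descending[OF fin two])
    fix v assume v: "v \<in> C - {x}"
    have "dist v \<noteq> 0"
    proof
      assume "dist v = 0"
      then show False using dist[of v] v by simp
    qed
    then obtain k where "dist v = Suc k" by (cases "dist v") auto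
    then obtain u where u: "(x, u) \<in> ?R ^^ k" "(u, v) \<in> ?R" using dist[of v] v by auto
    then obtain e where e: "e \<in> F" "u \<in> e" "v \<in> e" unfolding edge_rel_def by blast
    have "e \<subseteq> C" using edge_closed[OF e(1,3)] v by blast
    moreover have "dist u < dist v" using dist_le[OF u(1)] \<open>dist v = Suc k\<close> by simp
    ultimately show "\<exists>e\<in>F. e \<subseteq> C \<and> v \<in> e \<and> (\<exists>u\<in>e. dist u < dist v)"
      using e by blast
  qed
  moreover have "x \<in> C" unfolding C_def by simp
  ultimately show ?thesis by (simp add: card_Diff_singleton_if)
qed

section \<open>Levels\<close>

fun color_sign :: "color \<Rightarrow> int" where
  "color_sign W = 1"
| "color_sign B = -1"

definition color_sum :: "color list \<Rightarrow> int" where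
  "color_sum xs = sum_list (map color_sign xs)"

definition row_level :: "color list \<Rightarrow> nat \<Rightarrow> int" where
  "row_level xs j = color_sum (take j xs) - of_bool (xs ! j = B)"

fun level :: "ptn \<Rightarrow> pt \<Rightarrow> int" where
  "level p (Lo j) = row_level (lcol p) j"
| "level p (Up i) = row_level (ucol p) i"

definition cyclic_colors :: "ptn \<Rightarrow> color list" where
  "cyclic_colors p = lcol p @ map opp (rev (ucol p))"

definition balanced :: "ptn \<Rightarrow> bool" where
  "balanced p \<longleftrightarrow> color_sum (lcol p) = color_sum (ucol p)"

lemma color_sign_opp [simp]: "color_sign (opp c) = - color_sign c"
  by (cases c) auto

lemma opp_opp [simp]: "opp (opp c) = c"
  by (cases c) auto

lemma opp_eq_iff [simp]: "opp c = opp d \<longleftrightarrow> c = d"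
  by (cases c; cases d) auto

lemma color_sum_Nil [simp]: "color_sum [] = 0"
  and color_sum_Cons [simp]: "color_sum (c # cs) = color_sign c + color_sum cs"
  and color_sum_append [simp]: "color_sum (xs @ ys) = color_sum xs + color_sum ys"
  and color_sum_rev [simp]: "color_sum (rev xs) = color_sum xs"
  by (simp_all add: color_sum_def sum_list_rev flip: rev_map)

lemma color_sum_map_opp [simp]: "color_sum (map opp xs) = - color_sum xs"
  by (induction xs) auto

lemma sum_color_sign_nth: "j \<le> length xs \<Longrightarrow> (\<Sum>k<j. color_sign (xs ! k)) = color_sum (take j xs)"
proof (induction j)
  case (Suc j)
  then show ?case by (simp add: take_Suc_conv_app_nth)
qed simp

lemma finite_points [simp]: "finite (points p)"
  unfolding points_def by auto

lemma length_cyclic_colors: "length (cyclic_colors p) = length (lcol p) + length (ucol p)"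
  by (simp add: cyclic_colors_def)

lemma pos_less_length: "x \<in> points p \<Longrightarrow> pos p x < length (cyclic_colors p)"
  by (auto simp: points_def length_cyclic_colors)

lemma cyclic_colors_pos: "x \<in> points p \<Longrightarrow> cyclic_colors p ! pos p x = ncol p x"
  by (auto simp: points_def cyclic_colors_def nth_append rev_nth)

lemma inj_on_pos: "inj_on (pos p) (points p)"
  by (auto simp: inj_on_def points_def)

lemma pos_neq: "x \<in> points p \<Longrightarrow> y \<in> points p \<Longrightarrow> x \<noteq> y \<Longrightarrow> pos p x \<noteq> pos p y"
  using inj_on_pos by (rule inj_on_contraD)

lemma pos_image: "pos p ` points p = {..<length (cyclic_colors p)}"
proof -
  have "k \<in> pos p ` points p" if "k < length (cyclic_colors p)" for k
  proof (cases "k < length (lcol p)")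
    case True
    then show ?thesis by (force simp: points_def)
  next
    case False
    let ?i = "length (ucol p) - 1 - (k - length (lcol p))"
    have "pos p (Up ?i) = k" "Up ?i \<in> points p"
      using False that by (auto simp: length_cyclic_colors points_def)
    then show ?thesis by (metis imageI)
  qed
  then show ?thesis using pos_less_length by auto
qed

lemma color_sign_eq: "color_sign c = of_bool (c = W) - of_bool (c = B)"
  by (cases c) auto

lemma sigma_eq_sum: "finite S \<Longrightarrow> sigma p S = (\<Sum>x\<in>S. color_sign (ncol p x))"
  by (simp add: sigma_def color_sign_eq sum_subtractf Int_def)

definition cyclic_height :: "ptn \<Rightarrow> nat \<Rightarrow> int" where
  "cyclic_height p j = (\<Sum>k<j. color_sign (cyclic_colors p ! k))"

lemma cyclic_height_Suc:
  "cyclic_height p (Suc j) = cyclic_height p j + color_sign (cyclic_colors p ! j)"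
  by (simp add: cyclic_height_def)

lemma sum_cyclic_colors_interval:
  "i \<le> j \<Longrightarrow> (\<Sum>k\<in>{i..<j}. color_sign (cyclic_colors p ! k)) = cyclic_height p j - cyclic_height p i"
  unfolding cyclic_height_def lessThan_atLeast0 by (simp add: sum_diff_nat_ivl)

lemma cyclic_height_length:
  "balanced p \<Longrightarrow> cyclic_height p (length (cyclic_colors p)) = 0"
  by (simp add: cyclic_height_def sum_color_sign_nth balanced_def cyclic_colors_def)

lemma sigma_eq_sum_pos:
  assumes "S \<subseteq> points p"
  shows "sigma p S = (\<Sum>k\<in>pos p ` S. color_sign (cyclic_colors p ! k))"
proof -
  have "inj_on (pos p) S" using inj_on_pos assms by (rule inj_on_subset)
  from sum.reindex[OF this]
  have "(\<Sum>k\<in>pos p ` S. color_sign (cyclic_colors p ! k)) =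
      (\<Sum>x\<in>S. color_sign (cyclic_colors p ! pos p x))"
    by simp
  also have "\<dots> = (\<Sum>x\<in>S. color_sign (ncol p x))"
    using assms cyclic_colors_pos by (intro sum.cong) auto
  moreover have "finite S" using assms by (rule finite_subset) simp
  ultimately show ?thesis by (simp add: sigma_eq_sum)
qed

lemma oi_subset_points: "oi p a b \<subseteq> points p"
  by (auto simp: oi_def)

lemma pos_oi: "pos p ` oi p a b = {k. k < length (cyclic_colors p) \<and> cyc_between (pos p a) (pos p b) k}"
proof -
  have "pos p ` oi p a b = {k \<in> pos p ` points p. cyc_between (pos p a) (pos p b) k}"
    unfolding oi_def by blast
  then show ?thesis using pos_image by simp
qed

lemma sigma_oi:
  assumes bal: "balanced p" and a: "a \<in> points p" and b: "b \<in> points p" and "a \<noteq> b"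
  shows "sigma p (oi p a b) =
    cyclic_height p (pos p b) - cyclic_height p (pos p a) - color_sign (ncol p a)"
proof -
  let ?N = "length (cyclic_colors p)" and ?a = "pos p a" and ?b = "pos p b"
  let ?f = "\<lambda>k. color_sign (cyclic_colors p ! k)"
  have "?a \<noteq> ?b" using pos_neq[OF a b \<open>a \<noteq> b\<close>] .
  have aN: "?a < ?N" and bN: "?b < ?N" using a b pos_less_length by auto
  from sigma_eq_sum_pos[OF oi_subset_points]
  have sigma: "sigma p (oi p a b) = sum ?f {k. k < ?N \<and> cyc_between ?a ?b k}"
    by (simp only: pos_oi)
  have "color_sign (ncol p a) = ?f ?a" using cyclic_colors_pos a by simp
  moreover have "sum ?f {k. k < ?N \<and> cyc_between ?a ?b k} = cyclic_height p ?b - cyclic_height p (Suc ?a)"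
  proof (cases "?a < ?b")
    case True
    then have "{k. k < ?N \<and> cyc_between ?a ?b k} = {Suc ?a..<?b}"
      using bN by (auto simp: cyc_between_def)
    then show ?thesis using True by (simp add: sum_cyclic_colors_interval)
  next
    case False
    with \<open>?a \<noteq> ?b\<close> have "?b < ?a" by simp
    then have "{k. k < ?N \<and> cyc_between ?a ?b k} = {..<?b} \<union> {Suc ?a..<?N}"
      using aN by (auto simp: cyc_between_def)
    moreover have "sum ?f ({..<?b} \<union> {Suc ?a..<?N}) = sum ?f {..<?b} + sum ?f {Suc ?a..<?N}"
      using \<open>?b < ?a\<close> by (intro sum.union_disjoint) auto
    moreover have "sum ?f {Suc ?a..<?N} = cyclic_height p ?N - cyclic_height p (Suc ?a)"
      using aN by (intro sum_cyclic_colors_interval) simp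
    ultimately show ?thesis
      using cyclic_height_length[OF bal] by (simp add: cyclic_height_def)
  qed
  ultimately show ?thesis using sigma cyclic_height_Suc by simp
qed

lemma level_eq_cyclic_height:
  assumes bal: "balanced p" and x: "x \<in> points p"
  shows "level p x = cyclic_height p (pos p x) - of_bool (ncol p x = B)"
proof -
  have height: "cyclic_height p (pos p x) = color_sum (take (pos p x) (cyclic_colors p))"
    unfolding cyclic_height_def using pos_less_length[OF x] by (intro sum_color_sign_nth) simp
  show ?thesis
  proof (cases x)
    case (Lo j)
    then have "j < length (lcol p)" using x by (auto simp: points_def)
    then show ?thesis using Lo height by (simp add: cyclic_colors_def row_level_def)
  next
    case (Up i)
    let ?u = "ucol p" and ?l = "lcol p"
    have i: "i < length ?u" using x Up by (auto simp: points_def)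
    have "take (pos p x) (cyclic_colors p) = ?l @ map opp (take (length ?u - 1 - i) (rev ?u))"
      using Up by (simp add: cyclic_colors_def take_map)
    also have "take (length ?u - 1 - i) (rev ?u) = rev (drop (Suc i) ?u)"
      using i by (simp add: take_rev)
    finally have "cyclic_height p (pos p x) = color_sum ?l - color_sum (drop (Suc i) ?u)"
      using height by simp
    also have "\<dots> = color_sum (take (Suc i) ?u)"
      using bal unfolding balanced_def
      by (metis append_take_drop_id color_sum_append add_diff_cancel_right')
    also have "\<dots> = color_sum (take i ?u) + color_sign (?u ! i)"
      using i by (simp add: take_Suc_conv_app_nth)
    finally show ?thesis using Up by (cases "?u ! i") (auto simp: row_level_def)
  qed
qed

lemma delta_eq_level_diff:
  assumes bal: "balanced p" and a: "a \<in> points p" and b: "b \<in> points p" and ab: "a \<noteq> b"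
  shows "delta p a b = level p b - level p a"
proof -
  have "b \<notin> oi p a b" by (simp add: oi_def cyc_between_def)
  moreover have "finite (oi p a b)" using oi_subset_points by (rule finite_subset) simp
  ultimately have "sigma p (hoi p a b) = sigma p (oi p a b) + color_sign (ncol p b)"
    using ab by (simp add: hoi_def sigma_eq_sum)
  then show ?thesis
    unfolding delta_def sigma_oi[OF assms] level_eq_cyclic_height[OF bal a]
      level_eq_cyclic_height[OF bal b]
    by (cases "ncol p a"; cases "ncol p b") auto
qed

section \<open>Leveled pair partitions\<close>

lemma pair_block:
  assumes "is_pair_partition p" "K \<in> blocks p"
  shows "K \<subseteq> points p" "card K = 2" "finite K"
  using assms unfolding is_pair_partition_def is_partition_def partition_on_def
  by (auto simp: card_ge_0_finite)

lemma pair_block_doubletonE: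
  assumes "is_pair_partition p" "K \<in> blocks p" "a \<in> K"
  obtains b where "K = {a, b}" "a \<noteq> b"
  using pair_block(2)[OF assms(1,2)] assms(3)
  by (metis card_2_iff insert_commute insertE singletonD)

lemma pair_block_nonemptyE:
  assumes "is_pair_partition p" "K \<in> blocks p"
  obtains a where "a \<in> K"
  using pair_block(2)[OF assms] by fastforce

lemma blocks_disjoint:
  assumes "is_partition p" "K \<in> blocks p" "K' \<in> blocks p" "K \<noteq> K'"
  shows "K \<inter> K' = {}"
  using assms unfolding is_partition_def partition_on_def disjoint_def by auto

lemma Union_blocks: "is_partition p \<Longrightarrow> \<Union>(blocks p) = points p"
  unfolding is_partition_def partition_on_def by auto

lemma finite_blocks: "is_partition p \<Longrightarrow> finite (blocks p)"
  by (metis Union_blocks finite_UnionD finite_points)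

lemma sum_points_blocks:
  assumes "is_partition p"
  shows "(\<Sum>x\<in>points p. f x) = (\<Sum>K\<in>blocks p. \<Sum>x\<in>K. f x)"
proof -
  have "\<forall>K\<in>blocks p. finite K"
    using Union_blocks[OF assms] by (metis Union_upper finite_points finite_subset)
  moreover have "\<forall>K\<in>blocks p. \<forall>K'\<in>blocks p. K \<noteq> K' \<longrightarrow> K \<inter> K' = {}"
    using blocks_disjoint[OF assms] by blast
  ultimately show ?thesis
    using sum.Union_disjoint[of "blocks p" f] Union_blocks[OF assms] by simp
qed

definition opposite_colored :: "ptn \<Rightarrow> bool" where
  "opposite_colored p \<longleftrightarrow> (\<forall>K\<in>blocks p. \<forall>a\<in>K. \<forall>b\<in>K. a \<noteq> b \<longrightarrow> ncol p a \<noteq> ncol p b)"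

lemma opposite_coloredD:
  "opposite_colored p \<Longrightarrow> K \<in> blocks p \<Longrightarrow> a \<in> K \<Longrightarrow> b \<in> K \<Longrightarrow> a \<noteq> b \<Longrightarrow> ncol p a \<noteq> ncol p b"
  unfolding opposite_colored_def by blast

definition leveled :: "ptn \<Rightarrow> bool" where
  "leveled p \<longleftrightarrow> is_pair_partition p \<and> opposite_colored p \<and>
     (\<forall>K\<in>blocks p. \<forall>a\<in>K. \<forall>b\<in>K. level p a = level p b)"

lemma leveled_pair_partition: "leveled p \<Longrightarrow> is_pair_partition p"
  unfolding leveled_def by blast

lemma leveled_partition: "leveled p \<Longrightarrow> is_partition p"
  unfolding leveled_def is_pair_partition_def by blast

lemma leveled_opposite_colored: "leveled p \<Longrightarrow> opposite_colored p"
  unfolding leveled_def by blast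

lemma leveled_level_eq: "leveled p \<Longrightarrow> K \<in> blocks p \<Longrightarrow> a \<in> K \<Longrightarrow> b \<in> K \<Longrightarrow> level p a = level p b"
  unfolding leveled_def by blast

lemma sum_color_sign_block:
  assumes "is_pair_partition p" "opposite_colored p" "K \<in> blocks p"
  shows "(\<Sum>x\<in>K. color_sign (ncol p x)) = 0"
proof -
  obtain a where "a \<in> K" using pair_block_nonemptyE[OF assms(1,3)] .
  then obtain b where "K = {a, b}" "a \<noteq> b" using pair_block_doubletonE[OF assms(1,3)] by blast
  moreover have "ncol p a \<noteq> ncol p b"
    using opposite_coloredD[OF assms(2,3) \<open>a \<in> K\<close>] calculation by simp
  ultimately show ?thesis by (cases "ncol p a"; cases "ncol p b") auto
qed

lemma balanced_if_opposite_colored: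
  assumes pp: "is_pair_partition p" and "opposite_colored p"
  shows "balanced p"
proof -
  have ip: "is_partition p" using pp by (simp add: is_pair_partition_def)
  have "color_sum (lcol p) - color_sum (ucol p) = color_sum (cyclic_colors p)"
    by (simp add: cyclic_colors_def)
  also have "\<dots> = sigma p (points p)"
    using sigma_eq_sum_pos[of "points p" p] by (simp add: pos_image sum_color_sign_nth)
  also have "\<dots> = (\<Sum>K\<in>blocks p. \<Sum>x\<in>K. color_sign (ncol p x))"
    by (simp add: sigma_eq_sum sum_points_blocks[OF ip])
  also have "\<dots> = 0"
    using sum_color_sign_block[OF assms] by simp
  finally show ?thesis by (simp add: balanced_def)
qed

lemma leveled_balanced: "leveled p \<Longrightarrow> balanced p"
  unfolding leveled_def by (blast intro: balanced_if_opposite_colored)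

lemma P2nb_opposite_colored:
  assumes "p \<in> P2nb"
  shows "opposite_colored p"
  unfolding opposite_colored_def
proof (intro ballI impI)
  fix K a b assume K: "K \<in> blocks p" and "a \<in> K" "b \<in> K" "a \<noteq> b"
  have pp: "is_pair_partition p" using assms by (simp add: P2nb_def)
  obtain x y where xy: "x \<in> K" "y \<in> K" "ncol p x = W" "ncol p y = B"
    using assms K unfolding P2nb_def by blast
  obtain z where "K = {x, z}" using pair_block_doubletonE[OF pp K xy(1)] .
  with xy have "K = {x, y}" by auto
  with \<open>a \<in> K\<close> \<open>b \<in> K\<close> \<open>a \<noteq> b\<close> xy show "ncol p a \<noteq> ncol p b" by auto
qed

lemma leveled_if_S0:
  assumes S: "p \<in> S0"
  shows "leveled p"
proof -
  have pp: "is_pair_partition p" and oc: "opposite_colored p"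
    using S P2nb_opposite_colored by (auto simp: S0_def P2nb_def)
  have "level p a = level p b" if K: "K \<in> blocks p" and "a \<in> K" "b \<in> K" for K a b
  proof (cases "a = b")
    case False
    have "a \<in> points p" "b \<in> points p" using pair_block(1)[OF pp K] that by auto
    then have "delta p a b = level p b - level p a"
      using delta_eq_level_diff[OF balanced_if_opposite_colored[OF pp oc]] False by blast
    moreover have "delta p a b = sigma p (oi p a b)"
      using opposite_coloredD[OF oc K that(2,3) False] by (simp add: delta_def)
    moreover have "sigma p (oi p a b) = 0" using S K that False by (auto simp: S0_def)
    ultimately show ?thesis by simp
  qed simp
  then show "leveled p" using pp oc unfolding leveled_def by blast
qed

lemma S0_if_leveled:
  assumes lv: "leveled p"
  shows "p \<in> S0"
proof -
  have pp: "is_pair_partition p" and oc: "opposite_colored p"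
    using lv by (simp_all add: leveled_pair_partition leveled_opposite_colored)
  have "p \<in> P2nb" unfolding P2nb_def
  proof (intro CollectI conjI pp ballI)
    fix K assume K: "K \<in> blocks p"
    obtain a where a: "a \<in> K" using pair_block_nonemptyE[OF pp K] .
    then obtain b where b: "K = {a, b}" "a \<noteq> b" using pair_block_doubletonE[OF pp K] by blast
    then have "ncol p a \<noteq> ncol p b" using opposite_coloredD[OF oc K] by blast
    then show "\<exists>a\<in>K. \<exists>b\<in>K. ncol p a = W \<and> ncol p b = B"
      using b by (cases "ncol p a"; cases "ncol p b") auto
  qed
  moreover have "sigma p (oi p a b) = 0"
    if K: "K \<in> blocks p" and "a \<in> K" "b \<in> K" "a \<noteq> b" for K a b
  proof -
    have "a \<in> points p" "b \<in> points p" using pair_block(1)[OF pp K] that by auto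
    then have "delta p a b = level p b - level p a"
      using delta_eq_level_diff[OF leveled_balanced[OF lv]] that(4) by blast
    also have "\<dots> = 0" using leveled_level_eq[OF lv K that(3,2)] by simp
    finally show ?thesis
      using opposite_coloredD[OF oc that] by (simp add: delta_def)
  qed
  ultimately show "p \<in> S0" unfolding S0_def by blast
qed

lemma S0_iff_leveled: "p \<in> S0 \<longleftrightarrow> leveled p"
  using leveled_if_S0 S0_if_leveled by blast

abbreviation precedes :: "ptn \<Rightarrow> pt \<Rightarrow> pt \<Rightarrow> bool" where
  "precedes p u v \<equiv> pos p u < pos p v"

lemma odd_count_iff_separated:
  fixes a b c d :: nat
  assumes "a < b" "c \<noteq> a" "c \<noteq> b" "d \<noteq> a" "d \<noteq> b"
  shows "odd (of_bool (a < c) + of_bool (a < d) + of_bool (b < c) + of_bool (b < d) :: nat)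
    \<longleftrightarrow> ((a < c \<and> c < b) \<longleftrightarrow> \<not> (a < d \<and> d < b))"
  using assms by (cases "a < c"; cases "b < c"; cases "a < d"; cases "b < d") auto

lemma pair_block_orderedE:
  assumes pp: "is_pair_partition p" and K: "K \<in> blocks p"
  obtains a b where "K = {a, b}" "precedes p a b"
proof -
  obtain x where "x \<in> K" using pair_block_nonemptyE[OF pp K] .
  then obtain y where xy: "K = {x, y}" "x \<noteq> y" using pair_block_doubletonE[OF pp K] by blast
  then have "pos p x \<noteq> pos p y" using pos_neq pair_block(1)[OF pp K] by auto
  then consider "precedes p x y" | "precedes p y x" by linarith
  then show ?thesis using that xy(1) by cases (auto simp: insert_commute)
qed

lemma crossing_iff_separated:
  assumes pp: "is_pair_partition p" and K: "K \<in> blocks p" "K = {a, b}" "precedes p a b"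
    and K': "K' \<in> blocks p" "K' = {c, d}" "c \<noteq> d" and "K \<noteq> K'"
  shows "crossing p K K' \<longleftrightarrow>
    ((precedes p a c \<and> precedes p c b) \<longleftrightarrow> \<not> (precedes p a d \<and> precedes p d b))"
proof -
  let ?between = "\<lambda>z. precedes p a z \<and> precedes p z b"
  have pts: "a \<in> points p" "b \<in> points p" "c \<in> points p" "d \<in> points p"
    using pair_block(1)[OF pp K(1)] pair_block(1)[OF pp K'(1)] K K' by auto
  have "K \<inter> K' = {}"
    using blocks_disjoint[OF _ K(1) K'(1) \<open>K \<noteq> K'\<close>] pp by (simp add: is_pair_partition_def)
  then have "c \<noteq> a" "c \<noteq> b" "d \<noteq> a" "d \<noteq> b" using K K' by auto
  then have "pos p c \<noteq> pos p a" "pos p c \<noteq> pos p b" "pos p d \<noteq> pos p a" "pos p d \<noteq> pos p b"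
    using pos_neq pts by auto
  then have oi_ab: "z \<in> oi p a b \<longleftrightarrow> ?between z" and oi_ba: "z \<in> oi p b a \<longleftrightarrow> \<not> ?between z"
    if "z \<in> K'" for z
    using that K' pts K(3) by (auto simp: oi_def cyc_between_def)
  show ?thesis
  proof
    assume "crossing p K K'"
    then obtain x y z w where xy: "x \<in> K" "y \<in> K" "x \<noteq> y" and zw: "z \<in> K'" "w \<in> K'"
      and "z \<in> oi p x y" "w \<in> oi p y x"
      unfolding crossing_def by blast
    with K(2) have "(z \<in> oi p a b \<and> w \<in> oi p b a) \<or> (z \<in> oi p b a \<and> w \<in> oi p a b)"
      by auto
    then have "?between z \<longleftrightarrow> \<not> ?between w"
      using oi_ab oi_ba zw by blast
    moreover from this have "z \<noteq> w" by blast
    with zw K'(2) have "z = c \<and> w = d \<or> z = d \<and> w = c" by blast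
    ultimately show "?between c \<longleftrightarrow> \<not> ?between d" by blast
  next
    assume "?between c \<longleftrightarrow> \<not> ?between d"
    then have "(c \<in> oi p a b \<and> d \<in> oi p b a) \<or> (d \<in> oi p a b \<and> c \<in> oi p b a)"
      using oi_ab oi_ba K'(2) by auto
    moreover have "a \<in> K" "b \<in> K" "a \<noteq> b" "c \<in> K'" "d \<in> K'" using K K' by auto
    ultimately show "crossing p K K'"
      unfolding crossing_def using \<open>K \<noteq> K'\<close> by blast
  qed
qed

lemma crossing_iff_odd_pair_count:
  assumes pp: "is_pair_partition p" and K: "K \<in> blocks p" and K': "K' \<in> blocks p"
    and "K \<noteq> K'"
  shows "crossing p K K' \<longleftrightarrow> odd (pair_count (precedes p) K K')"
proof -
  obtain a b where ab: "K = {a, b}" "precedes p a b" using pair_block_orderedE[OF pp K] .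
  obtain c where "c \<in> K'" using pair_block_nonemptyE[OF pp K'] .
  then obtain d where cd: "K' = {c, d}" "c \<noteq> d" using pair_block_doubletonE[OF pp K'] by blast
  have "K \<inter> K' = {}"
    using blocks_disjoint[OF _ K K' \<open>K \<noteq> K'\<close>] pp by (simp add: is_pair_partition_def)
  then have pos_ne: "pos p c \<noteq> pos p a" "pos p c \<noteq> pos p b" "pos p d \<noteq> pos p a" "pos p d \<noteq> pos p b"
    using pos_neq pair_block(1)[OF pp K] pair_block(1)[OF pp K'] ab cd by auto
  have "crossing p K K' \<longleftrightarrow>
      ((precedes p a c \<and> precedes p c b) \<longleftrightarrow> \<not> (precedes p a d \<and> precedes p d b))"
    by (rule crossing_iff_separated[OF pp K ab K' cd \<open>K \<noteq> K'\<close>])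
  also have "\<dots> \<longleftrightarrow> odd (pair_count (precedes p) K K')"
    using odd_count_iff_separated[OF ab(2) pos_ne] ab(2) \<open>c \<noteq> d\<close>
    unfolding ab(1) cd(1) by (subst pair_count_doubletons) auto
  finally show ?thesis .
qed

lemma dist_bl_eq_level_diff:
  assumes lv: "leveled p" and K: "K \<in> blocks p" and K': "K' \<in> blocks p" and "K \<noteq> K'"
    and a: "a \<in> K" and c: "c \<in> K'"
  shows "dist_bl p K K' = nat \<bar>level p c - level p a\<bar>"
proof -
  define a' where "a' = (SOME a. a \<in> K)"
  define c' where "c' = (SOME c. c \<in> K')"
  have a': "a' \<in> K" unfolding a'_def using a by (rule someI)
  have c': "c' \<in> K'" unfolding c'_def using c by (rule someI)
  have "K \<inter> K' = {}"
    using blocks_disjoint[OF leveled_partition[OF lv] K K' \<open>K \<noteq> K'\<close>] .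
  then have "a' \<noteq> c'" using a' c' by blast
  moreover have "a' \<in> points p" "c' \<in> points p"
    using pair_block(1)[OF leveled_pair_partition[OF lv]] K K' a' c' by blast+
  ultimately have "delta p a' c' = level p c' - level p a'"
    by (intro delta_eq_level_diff[OF leveled_balanced[OF lv]])
  then show ?thesis
    unfolding dist_bl_def a'_def[symmetric] c'_def[symmetric]
    using leveled_level_eq[OF lv K a' a] leveled_level_eq[OF lv K' c' c] by simp
qed

definition crossing_gaps_avoid :: "nat set \<Rightarrow> ptn \<Rightarrow> bool" where
  "crossing_gaps_avoid D p \<longleftrightarrow> (\<forall>K\<in>blocks p. \<forall>K'\<in>blocks p. K \<noteq> K' \<longrightarrow>
     odd (pair_count (precedes p) K K') \<longrightarrow> (\<forall>a\<in>K. \<forall>c\<in>K'. nat \<bar>level p c - level p a\<bar> \<notin> D))"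

lemma I_D_iff: "p \<in> I_D D \<longleftrightarrow> leveled p \<and> crossing_gaps_avoid D p"
proof -
  have "(crossing p K K' \<longrightarrow> dist_bl p K K' \<notin> D) \<longleftrightarrow>
      (K \<noteq> K' \<longrightarrow> odd (pair_count (precedes p) K K') \<longrightarrow>
        (\<forall>a\<in>K. \<forall>c\<in>K'. nat \<bar>level p c - level p a\<bar> \<notin> D))"
    if lv: "leveled p" and K: "K \<in> blocks p" and K': "K' \<in> blocks p" for K K'
  proof (cases "K = K'")
    case False
    obtain a where "a \<in> K" using pair_block_nonemptyE[OF leveled_pair_partition[OF lv] K] .
    moreover obtain c where "c \<in> K'"
      using pair_block_nonemptyE[OF leveled_pair_partition[OF lv] K'] .
    ultimately have "(\<forall>a\<in>K. \<forall>c\<in>K'. nat \<bar>level p c - level p a\<bar> \<notin> D) \<longleftrightarrow> dist_bl p K K' \<notin> D"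
      using dist_bl_eq_level_diff[OF lv K K' False, symmetric] by auto
    then show ?thesis
      using crossing_iff_odd_pair_count[OF leveled_pair_partition[OF lv] K K' False] False
      by blast
  qed (simp add: crossing_def)
  then show ?thesis
    unfolding I_D_def S0_iff_leveled crossing_gaps_avoid_def by auto
qed

lemma crossing_gaps_avoidI:
  assumes lv: "leveled p"
    and gap: "\<And>K K'. K \<in> blocks p \<Longrightarrow> K' \<in> blocks p \<Longrightarrow> K \<noteq> K' \<Longrightarrow>
      odd (pair_count (precedes p) K K') \<Longrightarrow> \<exists>a\<in>K. \<exists>c\<in>K'. nat \<bar>level p c - level p a\<bar> \<notin> D"
  shows "crossing_gaps_avoid D p"
  unfolding crossing_gaps_avoid_def
proof (intro ballI impI)
  fix K K' a c assume K: "K \<in> blocks p" and K': "K' \<in> blocks p" and "K \<noteq> K'"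
    and "odd (pair_count (precedes p) K K')" and a: "a \<in> K" and c: "c \<in> K'"
  then obtain a' c' where a': "a' \<in> K" and c': "c' \<in> K'"
    and "nat \<bar>level p c' - level p a'\<bar> \<notin> D"
    using gap by blast
  then show "nat \<bar>level p c - level p a\<bar> \<notin> D"
    using leveled_level_eq[OF lv K a a'] leveled_level_eq[OF lv K' c c'] by simp
qed

lemma crossing_gaps_avoidD:
  assumes "crossing_gaps_avoid D p" "K \<in> blocks p" "K' \<in> blocks p" "K \<noteq> K'"
    "odd (pair_count (precedes p) K K')" "a \<in> K" "c \<in> K'"
  shows "nat \<bar>level p c - level p a\<bar> \<notin> D"
  using assms unfolding crossing_gaps_avoid_def by blast

section \<open>Involution and tensor product\<close>

lemma swap_pt_swap_pt [simp]: "swap_pt (swap_pt x) = x"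
  by (cases x) auto

lemma inj_swap_pt: "inj swap_pt"
  by (metis injI swap_pt_swap_pt)

lemma blocks_invol: "blocks (invol p) = (`) swap_pt ` blocks p"
  by (simp add: invol_def)

lemma points_invol: "points (invol p) = swap_pt ` points p"
proof (intro set_eqI iffI)
  fix x assume "x \<in> points (invol p)"
  then have "swap_pt x \<in> points p" by (cases x) (auto simp: points_def invol_def)
  then show "x \<in> swap_pt ` points p" by (rule rev_image_eqI) simp
next
  fix x assume "x \<in> swap_pt ` points p"
  then show "x \<in> points (invol p)" by (auto simp: points_def invol_def)
qed

lemma ncol_invol: "ncol (invol p) (swap_pt x) = opp (ncol p x)"
  by (cases x) (auto simp: invol_def)

lemma level_invol: "level (invol p) (swap_pt x) = level p x"
  by (cases x) (auto simp: invol_def)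

lemma pos_invol:
  "x \<in> points p \<Longrightarrow> pos (invol p) (swap_pt x) = length (cyclic_colors p) - 1 - pos p x"
  by (cases x) (auto simp: invol_def points_def length_cyclic_colors)

lemma leveled_invol:
  assumes lv: "leveled p"
  shows "leveled (invol p)"
proof -
  have pp: "is_pair_partition p" using lv by (rule leveled_pair_partition)
  have inj: "inj_on swap_pt A" for A using inj_swap_pt by (rule inj_on_subset) simp
  have "is_partition (invol p)"
    unfolding is_partition_def points_invol blocks_invol
    using leveled_partition[OF lv] inj
    by (intro partition_on_inj_image_nonempty) (simp_all add: is_partition_def)
  moreover have "\<forall>K\<in>blocks (invol p). card K = 2"
    using pair_block(2)[OF pp] inj by (auto simp: blocks_invol card_image)
  moreover have "opposite_colored (invol p)"
    unfolding opposite_colored_def blocks_invol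
  proof (intro ballI impI, elim imageE)
    fix K a b L assume "a \<in> K" "b \<in> K" "a \<noteq> b" "K = swap_pt ` L" "L \<in> blocks p"
    moreover have "opposite_colored p" using lv by (rule leveled_opposite_colored)
    ultimately show "ncol (invol p) a \<noteq> ncol (invol p) b"
      using opposite_coloredD[of p L] by (auto simp: ncol_invol inj_eq[OF inj_swap_pt])
  qed
  moreover have "level (invol p) a = level (invol p) b"
    if K: "K \<in> blocks (invol p)" "a \<in> K" "b \<in> K" for K a b
  proof -
    obtain L a' b' where "L \<in> blocks p" "a' \<in> L" "b' \<in> L" "a = swap_pt a'" "b = swap_pt b'"
      using K unfolding blocks_invol by blast
    then show ?thesis using leveled_level_eq[OF lv, of L a' b'] by (simp add: level_invol)
  qed
  ultimately show ?thesis
    unfolding leveled_def is_pair_partition_def by blast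
qed

text \<open>Reversing the cyclic order turns the count of a crossing into its complement in
  \<open>2 \<cdot> 2\<close>, so it keeps its parity.\<close>
lemma odd_pair_count_invol:
  assumes pp: "is_pair_partition p" and K: "K \<in> blocks p" and L: "L \<in> blocks p" and "K \<noteq> L"
    and "odd (pair_count (precedes (invol p)) (swap_pt ` K) (swap_pt ` L))"
  shows "odd (pair_count (precedes p) K L)"
proof -
  have KL: "K \<subseteq> points p" "L \<subseteq> points p" "card K = 2" "card L = 2"
    using pair_block[OF pp K] pair_block[OF pp L] by auto
  have "K \<inter> L = {}"
    using blocks_disjoint[OF _ K L \<open>K \<noteq> L\<close>] pp by (simp add: is_pair_partition_def)
  have "pair_count (precedes (invol p)) (swap_pt ` K) (swap_pt ` L) =
      pair_count (\<lambda>u v. precedes (invol p) (swap_pt u) (swap_pt v)) K L"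
    using inj_on_subset[OF inj_swap_pt]
    by (simp add: pair_count_image_left pair_count_image_right)
  also have "\<dots> = pair_count (\<lambda>u v. precedes p v u) K L"
  proof (rule pair_count_cong)
    fix u v assume "u \<in> K" "v \<in> L"
    then have "u \<in> points p" "v \<in> points p" using KL by auto
    then show "precedes (invol p) (swap_pt u) (swap_pt v) \<longleftrightarrow> precedes p v u"
      using pos_invol pos_less_length[of u p] pos_less_length[of v p] by auto
  qed
  finally have "pair_count (precedes (invol p)) (swap_pt ` K) (swap_pt ` L) =
      pair_count (\<lambda>u v. precedes p v u) K L" .
  moreover have "pair_count (precedes p) K L + pair_count (\<lambda>u v. precedes p v u) K L = 4"
  proof -
    have "precedes p u v \<longleftrightarrow> \<not> precedes p v u" if "u \<in> K" "v \<in> L" for u v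
    proof -
      have "u \<in> points p" "v \<in> points p" "u \<noteq> v" using that KL \<open>K \<inter> L = {}\<close> by auto
      then show ?thesis using pos_neq[of u p v] by auto
    qed
    then show ?thesis using pair_count_complement[of K L] KL by simp
  qed
  ultimately show ?thesis using assms(5) by presburger
qed

lemma invol_in_I_D:
  assumes "p \<in> I_D D"
  shows "invol p \<in> I_D D"
proof -
  have lv: "leveled p" and gaps: "crossing_gaps_avoid D p" using assms I_D_iff by auto
  have "crossing_gaps_avoid D (invol p)"
  proof (rule crossing_gaps_avoidI[OF leveled_invol[OF lv]])
    fix K1 K2 assume "K1 \<in> blocks (invol p)" "K2 \<in> blocks (invol p)" "K1 \<noteq> K2"
      and odd: "odd (pair_count (precedes (invol p)) K1 K2)"
    then obtain L1 L2 where L: "L1 \<in> blocks p" "L2 \<in> blocks p" "L1 \<noteq> L2"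
      and K: "K1 = swap_pt ` L1" "K2 = swap_pt ` L2"
      unfolding blocks_invol by auto
    obtain a where "a \<in> L1" using pair_block_nonemptyE[OF leveled_pair_partition[OF lv] L(1)] .
    moreover obtain c where "c \<in> L2"
      using pair_block_nonemptyE[OF leveled_pair_partition[OF lv] L(2)] .
    moreover have "odd (pair_count (precedes p) L1 L2)"
      using odd_pair_count_invol[OF leveled_pair_partition[OF lv] L] odd K by simp
    ultimately have "nat \<bar>level p c - level p a\<bar> \<notin> D"
      using crossing_gaps_avoidD[OF gaps L] by simp
    then show "\<exists>a\<in>K1. \<exists>c\<in>K2. nat \<bar>level (invol p) c - level (invol p) a\<bar> \<notin> D"
      using K \<open>a \<in> L1\<close> \<open>c \<in> L2\<close> by (auto simp: level_invol)
  qed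
  then show ?thesis using I_D_iff leveled_invol[OF lv] by blast
qed

abbreviation right_shift :: "ptn \<Rightarrow> pt \<Rightarrow> pt" where
  "right_shift p \<equiv> shift (length (ucol p)) (length (lcol p))"

fun is_lower :: "pt \<Rightarrow> bool" where
  "is_lower (Lo j) = True"
| "is_lower (Up i) = False"

lemma inj_shift: "inj (shift k l)"
proof (rule injI)
  fix x y assume "shift k l x = shift k l y"
  then show "x = y" by (cases x; cases y) auto
qed

lemma blocks_tensor: "blocks (tensor p q) = blocks p \<union> (`) (right_shift p) ` blocks q"
  by (simp add: tensor_def)

lemma points_tensor: "points (tensor p q) = points p \<union> right_shift p ` points q"
proof (intro set_eqI iffI)
  fix x assume x: "x \<in> points (tensor p q)"
  show "x \<in> points p \<union> right_shift p ` points q"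
  proof (cases x)
    case (Up i)
    show ?thesis
    proof (cases "i < length (ucol p)")
      case False
      then have "x = right_shift p (Up (i - length (ucol p)))" "Up (i - length (ucol p)) \<in> points q"
        using Up x by (auto simp: points_def tensor_def)
      then show ?thesis by blast
    qed (simp add: Up points_def)
  next
    case (Lo j)
    show ?thesis
    proof (cases "j < length (lcol p)")
      case False
      then have "x = right_shift p (Lo (j - length (lcol p)))" "Lo (j - length (lcol p)) \<in> points q"
        using Lo x by (auto simp: points_def tensor_def)
      then show ?thesis by blast
    qed (simp add: Lo points_def)
  qed
qed (auto simp: points_def tensor_def)

lemma points_Int_right_shift: "points p \<inter> right_shift p ` points q = {}"
  by (auto simp: points_def)

lemma ncol_tensor_left: "x \<in> points p \<Longrightarrow> ncol (tensor p q) x = ncol p x"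
  by (cases x) (auto simp: points_def tensor_def nth_append)

lemma ncol_tensor_right: "ncol (tensor p q) (right_shift p y) = ncol q y"
  by (cases y) (auto simp: tensor_def nth_append)

lemma level_tensor_left: "x \<in> points p \<Longrightarrow> level (tensor p q) x = level p x"
  by (cases x) (auto simp: points_def tensor_def row_level_def nth_append)

lemma level_tensor_right:
  "balanced p \<Longrightarrow> level (tensor p q) (right_shift p y) = level q y + color_sum (ucol p)"
  by (cases y) (auto simp: tensor_def row_level_def nth_append balanced_def)

lemma precedes_tensor_left:
  "x \<in> points p \<Longrightarrow> y \<in> points p \<Longrightarrow> precedes (tensor p q) x y \<longleftrightarrow> precedes p x y"
  by (cases x; cases y) (auto simp: points_def tensor_def)

lemma pos_tensor_right:
  "y \<in> points q \<Longrightarrow> pos (tensor p q) (right_shift p y) = pos q y + length (lcol p)"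
  by (cases y) (auto simp: tensor_def points_def)

lemma precedes_tensor_right:
  "x \<in> points q \<Longrightarrow> y \<in> points q \<Longrightarrow>
    precedes (tensor p q) (right_shift p x) (right_shift p y) \<longleftrightarrow> precedes q x y"
  by (simp add: pos_tensor_right)

text \<open>In the cyclic order of \<open>p \<otimes> q\<close> the points of \<open>q\<close> form an interval between the lower
  and the upper points of \<open>p\<close>.\<close>
lemma precedes_tensor_mixed:
  assumes "x \<in> points p" "y \<in> points q"
  shows "precedes (tensor p q) x (right_shift p y) \<longleftrightarrow> is_lower x"
    and "precedes (tensor p q) (right_shift p y) x \<longleftrightarrow> \<not> is_lower x"
  using assms pos_less_length[OF assms(2)]
  by (cases x; auto simp: pos_tensor_right points_def tensor_def length_cyclic_colors)+

lemma leveled_tensor: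
  assumes lp: "leveled p" and lq: "leveled q"
  shows "leveled (tensor p q)"
proof -
  let ?sh = "right_shift p"
  have inj: "inj_on ?sh A" for A using inj_shift by (rule inj_on_subset) simp
  have "is_partition (tensor p q)"
    unfolding is_partition_def points_tensor blocks_tensor
    using leveled_partition[OF lp] leveled_partition[OF lq] inj points_Int_right_shift
    by (intro partition_on_Un partition_on_inj_image_nonempty) (simp_all add: is_partition_def)
  moreover have "\<forall>K\<in>blocks (tensor p q). card K = 2"
    using pair_block(2)[OF leveled_pair_partition[OF lp]] pair_block(2)[OF leveled_pair_partition[OF lq]]
    by (auto simp: blocks_tensor card_image inj)
  moreover have "ncol (tensor p q) a \<noteq> ncol (tensor p q) b \<and> level (tensor p q) a = level (tensor p q) b"
    if K: "K \<in> blocks (tensor p q)" "a \<in> K" "b \<in> K" "a \<noteq> b" for K a b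
  proof (cases "K \<in> blocks p")
    case True
    have "a \<in> points p" "b \<in> points p"
      using pair_block(1)[OF leveled_pair_partition[OF lp] True] K by auto
    then show ?thesis
      using opposite_coloredD[OF leveled_opposite_colored[OF lp] True K(2-4)]
        leveled_level_eq[OF lp True K(2,3)]
      by (simp add: ncol_tensor_left level_tensor_left)
  next
    case False
    then obtain L a' b' where "L \<in> blocks q" "a' \<in> L" "b' \<in> L" "a = ?sh a'" "b = ?sh b'"
      using K unfolding blocks_tensor by blast
    moreover from calculation have "a' \<noteq> b'" using K(4) by blast
    ultimately show ?thesis
      using opposite_coloredD[OF leveled_opposite_colored[OF lq], of L a' b']
        leveled_level_eq[OF lq, of L a' b']
      by (simp add: ncol_tensor_right level_tensor_right[OF leveled_balanced[OF lp]])
  qed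
  ultimately show ?thesis
    unfolding leveled_def is_pair_partition_def opposite_colored_def by blast
qed

lemma even_pair_count_tensor_mixed:
  assumes pp: "is_pair_partition p" and pq: "is_pair_partition q"
  shows "K \<in> blocks p \<Longrightarrow> L \<in> blocks q \<Longrightarrow>
      even (pair_count (precedes (tensor p q)) K (right_shift p ` L))"
    and "L \<in> blocks q \<Longrightarrow> K \<in> blocks p \<Longrightarrow>
      even (pair_count (precedes (tensor p q)) (right_shift p ` L) K)"
proof -
  have inj: "inj_on (right_shift p) A" for A using inj_shift by (rule inj_on_subset) simp
  show "even (pair_count (precedes (tensor p q)) K (right_shift p ` L))"
    if K: "K \<in> blocks p" and L: "L \<in> blocks q"
    unfolding pair_count_image_right[OF inj]
    using pair_block[OF pp K] pair_block[OF pq L] precedes_tensor_mixed(1)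
    by (intro even_pair_count_left[of L _ _ is_lower]) blast+
  show "even (pair_count (precedes (tensor p q)) (right_shift p ` L) K)"
    if L: "L \<in> blocks q" and K: "K \<in> blocks p"
    unfolding pair_count_image_left[OF inj]
    using pair_block[OF pp K] pair_block[OF pq L] precedes_tensor_mixed(2)
    by (intro even_pair_count_right[of L _ _ "\<lambda>v. \<not> is_lower v"]) blast+
qed

lemma pair_count_tensor_left:
  assumes "is_pair_partition p" "K \<in> blocks p" "L \<in> blocks p"
  shows "pair_count (precedes (tensor p q)) K L = pair_count (precedes p) K L"
  using pair_block(1)[OF assms(1)] assms(2,3) precedes_tensor_left by (intro pair_count_cong) blast

lemma pair_count_tensor_right:
  assumes "is_pair_partition q" "K \<in> blocks q" "L \<in> blocks q"
  shows "pair_count (precedes (tensor p q)) (right_shift p ` K) (right_shift p ` L) =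
    pair_count (precedes q) K L"
proof -
  have inj: "inj_on (right_shift p) A" for A using inj_shift by (rule inj_on_subset) simp
  show ?thesis
    unfolding pair_count_image_left[OF inj] pair_count_image_right[OF inj]
    using pair_block(1)[OF assms(1)] assms(2,3) precedes_tensor_right by (intro pair_count_cong) blast
qed

lemma tensor_in_I_D:
  assumes "p \<in> I_D D" "q \<in> I_D D"
  shows "tensor p q \<in> I_D D"
proof -
  let ?t = "tensor p q" and ?sh = "right_shift p"
  have lp: "leveled p" and gp: "crossing_gaps_avoid D p"
    and lq: "leveled q" and gq: "crossing_gaps_avoid D q"
    using assms I_D_iff by auto
  have pp: "is_pair_partition p" and pq: "is_pair_partition q"
    using lp lq by (simp_all add: leveled_pair_partition)
  have "crossing_gaps_avoid D ?t"
  proof (rule crossing_gaps_avoidI[OF leveled_tensor[OF lp lq]])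
    fix K1 K2 assume K: "K1 \<in> blocks ?t" "K2 \<in> blocks ?t" "K1 \<noteq> K2"
      and odd: "odd (pair_count (precedes ?t) K1 K2)"
    show "\<exists>a\<in>K1. \<exists>c\<in>K2. nat \<bar>level ?t c - level ?t a\<bar> \<notin> D"
    proof (cases "K1 \<in> blocks p"; cases "K2 \<in> blocks p")
      assume K1: "K1 \<in> blocks p" and K2: "K2 \<in> blocks p"
      obtain a where a: "a \<in> K1" using pair_block_nonemptyE[OF pp K1] .
      obtain c where c: "c \<in> K2" using pair_block_nonemptyE[OF pp K2] .
      have "nat \<bar>level p c - level p a\<bar> \<notin> D"
        using crossing_gaps_avoidD[OF gp K1 K2 \<open>K1 \<noteq> K2\<close> _ a c] odd
        by (simp add: pair_count_tensor_left[OF pp K1 K2])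
      moreover have "a \<in> points p" "c \<in> points p" using pair_block(1)[OF pp] K1 K2 a c by blast+
      ultimately show ?thesis using a c by (metis level_tensor_left)
    next
      assume K1: "K1 \<in> blocks p" and "K2 \<notin> blocks p"
      then obtain L2 where "L2 \<in> blocks q" "K2 = ?sh ` L2" using K(2) blocks_tensor by auto
      then show ?thesis using odd even_pair_count_tensor_mixed(1)[OF pp pq K1] by simp
    next
      assume "K1 \<notin> blocks p" and K2: "K2 \<in> blocks p"
      then obtain L1 where "L1 \<in> blocks q" "K1 = ?sh ` L1" using K(1) blocks_tensor by auto
      then show ?thesis using odd even_pair_count_tensor_mixed(2)[OF pp pq _ K2] by simp
    next
      assume "K1 \<notin> blocks p" "K2 \<notin> blocks p"
      then obtain L1 L2 where L: "L1 \<in> blocks q" "L2 \<in> blocks q" "L1 \<noteq> L2"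
        and K1: "K1 = ?sh ` L1" and K2: "K2 = ?sh ` L2"
        using K blocks_tensor by auto
      obtain a where a: "a \<in> L1" using pair_block_nonemptyE[OF pq L(1)] .
      obtain c where c: "c \<in> L2" using pair_block_nonemptyE[OF pq L(2)] .
      have "nat \<bar>level q c - level q a\<bar> \<notin> D"
        using crossing_gaps_avoidD[OF gq L _ a c] odd
        by (simp add: K1 K2 pair_count_tensor_right[OF pq L(1,2)])
      then show ?thesis
        using K1 K2 a c by (auto simp: level_tensor_right[OF leveled_balanced[OF lp]])
    qed
  qed
  then show ?thesis using I_D_iff leveled_tensor[OF lp lq] by blast
qed

lemma single_block_in_I_D:
  assumes "blocks p = {K}" and "leveled p"
  shows "p \<in> I_D D"
  using assms by (auto simp: I_D_iff crossing_gaps_avoid_def)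

lemma leveled_single_pairI:
  assumes "points p = {a, b}" "blocks p = {{a, b}}" "a \<noteq> b"
    "ncol p a \<noteq> ncol p b" "level p a = level p b"
  shows "leveled p"
proof -
  have "is_pair_partition p"
    using assms(1-3) partition_on_space[of "{a, b}"] by (simp add: is_pair_partition_def is_partition_def)
  then show ?thesis using assms unfolding leveled_def opposite_colored_def by auto
qed

lemma id_part_in_I_D: "id_part c \<in> I_D D"
proof (rule single_block_in_I_D)
  show "leveled (id_part c)"
    by (rule leveled_single_pairI[of _ "Up 0" "Lo 0"])
      (auto simp: points_def id_part_def row_level_def, cases c, auto)
qed (simp add: id_part_def)

lemma pair_part_in_I_D: "c \<noteq> d \<Longrightarrow> pair_part c d \<in> I_D D"
proof (rule single_block_in_I_D)
  assume "c \<noteq> d"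
  then show "leveled (pair_part c d)"
    by (intro leveled_single_pairI[of _ "Lo 0" "Lo 1"])
      (auto simp: points_def pair_part_def less_2_cases_iff row_level_def, (cases c; cases d; simp)+)
qed (simp add: pair_part_def)

section \<open>Composition\<close>

lemma embedded_pair_blocks:
  assumes pp: "is_pair_partition P" and inj: "inj f"
  shows "disjoint ((`) f ` blocks P)" "\<forall>e\<in>(`) f ` blocks P. card e = 2"
    "\<Union>((`) f ` blocks P) = f ` points P" "finite ((`) f ` blocks P)"
proof -
  have ip: "is_partition P" using pp by (simp add: is_pair_partition_def)
  show "disjoint ((`) f ` blocks P)"
    using ip inj by (intro disjoint_image) (auto simp: is_partition_def partition_on_def inj_on_def)
  show "\<forall>e\<in>(`) f ` blocks P. card e = 2"
    using pair_block(2)[OF pp] inj by (auto simp: card_image inj_on_subset)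
  show "\<Union>((`) f ` blocks P) = f ` points P"
    using Union_blocks[OF ip] by blast
  show "finite ((`) f ` blocks P)" using finite_blocks[OF ip] by simp
qed

lemma odd_pair_count_embedded_blocksE:
  assumes pp: "is_pair_partition P" and inj: "inj f"
    and pos: "\<And>y. y \<in> points P \<Longrightarrow> \<rho> (f y) = pos P y"
    and E: "E1 \<subseteq> (`) f ` blocks P" "E2 \<subseteq> (`) f ` blocks P"
    and odd: "odd (pair_count (\<lambda>u v. \<rho> u < \<rho> v) (\<Union>E1) (\<Union>E2))"
  obtains K L where "K \<in> blocks P" "L \<in> blocks P" "f ` K \<in> E1" "f ` L \<in> E2"
    "odd (pair_count (precedes P) K L)"
proof -
  note emb = embedded_pair_blocks[OF pp inj]
  have fin: "finite E1" "finite E2" using finite_subset[OF E(1) emb(4)] finite_subset[OF E(2) emb(4)] .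
  have "disjoint E1" "disjoint E2"
    using pairwise_subset[OF emb(1) E(1)] pairwise_subset[OF emb(1) E(2)] .
  moreover have "\<forall>e\<in>E1 \<union> E2. finite e" using E emb(2) finite_if_card_eq_2 by blast
  ultimately obtain e e' where "e \<in> E1" "e' \<in> E2"
    and odd_e: "odd (pair_count (\<lambda>u v. \<rho> u < \<rho> v) e e')"
    using odd_pair_count_UnionE[OF fin] odd by blast
  obtain K where K: "K \<in> blocks P" "e = f ` K" using \<open>e \<in> E1\<close> E(1) by auto
  obtain L where L: "L \<in> blocks P" "e' = f ` L" using \<open>e' \<in> E2\<close> E(2) by auto
  have "pair_count (\<lambda>u v. \<rho> u < \<rho> v) e e' = pair_count (precedes P) K L"
    unfolding K(2) L(2) pair_count_image_left[OF inj_on_subset[OF inj subset_UNIV]]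
      pair_count_image_right[OF inj_on_subset[OF inj subset_UNIV]]
  proof (rule pair_count_cong)
    fix u v assume "u \<in> K" "v \<in> L"
    then have "u \<in> points P" "v \<in> points P" using pair_block(1)[OF pp] K L by blast+
    then show "\<rho> (f u) < \<rho> (f v) \<longleftrightarrow> precedes P u v" by (simp add: pos)
  qed
  with odd_e have "odd (pair_count (precedes P) K L)" by simp
  with K L \<open>e \<in> E1\<close> \<open>e' \<in> E2\<close> show ?thesis by (intro that) auto
qed

lemma sum_Union_embedded_blocks:
  assumes lv: "leveled P" and inj: "inj f" and E: "E \<subseteq> (`) f ` blocks P"
    and g: "\<And>y. y \<in> points P \<Longrightarrow> g (f y) = color_sign (ncol P y)"
  shows "(\<Sum>z\<in>\<Union>E. g z) = 0"
proof -
  note emb = embedded_pair_blocks[OF leveled_pair_partition[OF lv] inj]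
  have "\<forall>e\<in>E. finite e" using E emb(2) by (auto intro: finite_if_card_eq_2)
  moreover have "\<forall>e\<in>E. \<forall>e'\<in>E. e \<noteq> e' \<longrightarrow> e \<inter> e' = {}"
    using pairwise_subset[OF emb(1) E] by (auto simp: disjoint_def)
  ultimately have "(\<Sum>z\<in>\<Union>E. g z) = (\<Sum>e\<in>E. \<Sum>z\<in>e. g z)"
    using sum.Union_disjoint[of E g] by simp
  also have "\<dots> = 0"
  proof (rule sum.neutral, rule ballI)
    fix e assume "e \<in> E"
    then obtain K where K: "K \<in> blocks P" "e = f ` K" using E by auto
    have "(\<Sum>z\<in>e. g z) = (\<Sum>y\<in>K. g (f y))"
      unfolding K(2) using inj by (simp add: sum.reindex inj_on_subset)
    also have "\<dots> = (\<Sum>y\<in>K. color_sign (ncol P y))"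
      using pair_block(1)[OF leveled_pair_partition[OF lv] K(1)] g by (intro sum.cong) auto
    also have "\<dots> = 0"
      using sum_color_sign_block leveled_pair_partition[OF lv] leveled_opposite_colored[OF lv] K(1)
      by blast
    finally show "(\<Sum>z\<in>e. g z) = 0" .
  qed
  finally show ?thesis .
qed

lemma inj_top_emb: "inj top_emb"
proof (rule injI)
  fix x y assume "top_emb x = top_emb y"
  then show "x = y" by (cases x; cases y) auto
qed

lemma inj_bot_emb: "inj bot_emb"
proof (rule injI)
  fix x y assume "bot_emb x = bot_emb y"
  then show "x = y" by (cases x; cases y) auto
qed

text \<open>Inverses of the embeddings of the two factors into the stacked picture (with junk values
  outside their images).\<close>
fun from_top :: "cpt \<Rightarrow> pt" where
  "from_top (T i) = Up i"
| "from_top (M j) = Lo j"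
| "from_top (Bt j) = Lo j"

fun from_bot :: "cpt \<Rightarrow> pt" where
  "from_bot (T i) = Up i"
| "from_bot (M j) = Up j"
| "from_bot (Bt j) = Lo j"

lemma from_top_top_emb [simp]: "from_top (top_emb y) = y"
  by (cases y) auto

lemma from_bot_bot_emb [simp]: "from_bot (bot_emb y) = y"
  by (cases y) auto

text \<open>In the stacked picture of \<open>comp p q\<close>, the partition \<open>q\<close> occupies the upper and \<open>p\<close> the
  lower vertices; the middle row \<open>M j\<close> consists of the vertices that are both.\<close>
locale composable =
  fixes p q :: ptn
  assumes leveled_p: "leveled p" and leveled_q: "leveled q" and middle: "lcol q = ucol p"
begin

abbreviation upper :: "cpt set" where
  "upper \<equiv> top_emb ` points q"

abbreviation lower :: "cpt set" where
  "lower \<equiv> bot_emb ` points p"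

abbreviation outer :: "cpt set" where
  "outer \<equiv> outer_pts p q"

definition upper_edges :: "cpt set set" where
  "upper_edges = (`) top_emb ` blocks q"

definition lower_edges :: "cpt set set" where
  "lower_edges = (`) bot_emb ` blocks p"

definition component :: "cpt \<Rightarrow> cpt set" where
  "component x = {y. (x, y) \<in> (comp_rel p q)\<^sup>*}"

fun vcolor :: "cpt \<Rightarrow> color" where
  "vcolor (T i) = ncol q (Up i)"
| "vcolor (M j) = ncol q (Lo j)"
| "vcolor (Bt j) = ncol p (Lo j)"

fun vlevel :: "cpt \<Rightarrow> int" where
  "vlevel (T i) = level q (Up i)"
| "vlevel (M j) = level q (Lo j)"
| "vlevel (Bt j) = level p (Lo j)"

definition qpos :: "cpt \<Rightarrow> nat" where
  "qpos z = pos q (from_top z)"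

definition ppos :: "cpt \<Rightarrow> nat" where
  "ppos z = pos p (from_bot z)"

definition rpos :: "cpt \<Rightarrow> nat" where
  "rpos z = pos (comp p q) (from_outer z)"

lemma pair_partition_p: "is_pair_partition p"
  and pair_partition_q: "is_pair_partition q"
  using leveled_p leveled_q by (simp_all add: leveled_pair_partition)

lemma upper_eq: "upper = {T i | i. i < length (ucol q)} \<union> {M j | j. j < length (ucol p)}"
proof (intro set_eqI iffI)
  fix z assume "z \<in> {T i | i. i < length (ucol q)} \<union> {M j | j. j < length (ucol p)}"
  then show "z \<in> upper"
    using middle by (auto simp: points_def intro: rev_image_eqI[of "Up _"] rev_image_eqI[of "Lo _"])
qed (auto simp: points_def middle)

lemma lower_eq: "lower = {M j | j. j < length (ucol p)} \<union> {Bt j | j. j < length (lcol p)}"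
proof (intro set_eqI iffI)
  fix z assume "z \<in> {M j | j. j < length (ucol p)} \<union> {Bt j | j. j < length (lcol p)}"
  then show "z \<in> lower"
    by (auto simp: points_def intro: rev_image_eqI[of "Up _"] rev_image_eqI[of "Lo _"])
qed (auto simp: points_def)

lemma outer_eq: "outer = (upper - lower) \<union> (lower - upper)"
  unfolding upper_eq lower_eq outer_pts_def by auto

lemma Union_upper_edges: "\<Union>upper_edges = upper"
  unfolding upper_edges_def by (rule embedded_pair_blocks(3)[OF pair_partition_q inj_top_emb])

lemma Union_lower_edges: "\<Union>lower_edges = lower"
  unfolding lower_edges_def by (rule embedded_pair_blocks(3)[OF pair_partition_p inj_bot_emb])

lemma comp_rel_eq: "comp_rel p q = edge_rel (upper_edges \<union> lower_edges)"
proof (intro set_eqI iffI)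
  fix z assume "z \<in> comp_rel p q"
  then show "z \<in> edge_rel (upper_edges \<union> lower_edges)"
    unfolding comp_rel_def
  proof (elim UnE CollectE exE conjE bexE)
    fix x y K assume "z = (top_emb x, top_emb y)" "K \<in> blocks q" "x \<in> K" "y \<in> K"
    then show ?thesis unfolding edge_rel_def upper_edges_def by blast
  next
    fix x y K assume "z = (bot_emb x, bot_emb y)" "K \<in> blocks p" "x \<in> K" "y \<in> K"
    then show ?thesis unfolding edge_rel_def lower_edges_def by blast
  qed
next
  fix z assume "z \<in> edge_rel (upper_edges \<union> lower_edges)"
  then obtain e u v where "z = (u, v)" "e \<in> upper_edges \<union> lower_edges" "u \<in> e" "v \<in> e"
    unfolding edge_rel_def by blast
  then show "z \<in> comp_rel p q"
    unfolding comp_rel_def upper_edges_def lower_edges_def by blast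
qed

lemma vlevel_top_emb: "vlevel (top_emb y) = level q y"
  by (cases y) auto

lemma vlevel_bot_emb: "vlevel (bot_emb y) = level p y"
  using middle by (cases y) auto

lemma vcolor_top_emb: "vcolor (top_emb y) = ncol q y"
  by (cases y) auto

lemma vlevel_edge:
  assumes "e \<in> upper_edges \<union> lower_edges" "u \<in> e" "v \<in> e"
  shows "vlevel u = vlevel v"
  using assms(1) unfolding upper_edges_def lower_edges_def
proof (elim UnE imageE)
  fix K assume "e = top_emb ` K" "K \<in> blocks q"
  moreover from this obtain a b where "a \<in> K" "b \<in> K" "u = top_emb a" "v = top_emb b"
    using assms(2,3) by blast
  ultimately show ?thesis using leveled_level_eq[OF leveled_q, of K a b] by (simp add: vlevel_top_emb)
next
  fix K assume "e = bot_emb ` K" "K \<in> blocks p"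
  moreover from this obtain a b where "a \<in> K" "b \<in> K" "u = bot_emb a" "v = bot_emb b"
    using assms(2,3) by blast
  ultimately show ?thesis using leveled_level_eq[OF leveled_p, of K a b] by (simp add: vlevel_bot_emb)
qed

lemma component_refl: "x \<in> component x"
  by (simp add: component_def)

lemma component_eq:
  assumes "y \<in> component x"
  shows "component y = component x"
proof -
  let ?R = "(edge_rel (upper_edges \<union> lower_edges))\<^sup>*"
  have "(x, y) \<in> ?R" using assms by (simp add: component_def comp_rel_eq)
  moreover have "(y, x) \<in> ?R" using symD[OF sym_rtrancl[OF sym_edge_rel] calculation] .
  ultimately show ?thesis unfolding component_def comp_rel_eq by (auto intro: rtrancl_trans)
qed

lemma component_disjoint: "component x \<noteq> component y \<Longrightarrow> component x \<inter> component y = {}"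
  using component_eq by blast

lemma edge_subset_component:
  assumes "z \<in> component x" "e \<in> upper_edges \<union> lower_edges" "z \<in> e"
  shows "e \<subseteq> component x"
  using assms unfolding component_def comp_rel_eq edge_rel_def
  by (auto intro: rtrancl_into_rtrancl)

lemma vlevel_component:
  assumes "y \<in> component x"
  shows "vlevel y = vlevel x"
proof -
  have "(x, y) \<in> (edge_rel (upper_edges \<union> lower_edges))\<^sup>*"
    using assms by (simp add: component_def comp_rel_eq)
  then show ?thesis
  proof (induction rule: rtrancl_induct)
    case (step y z)
    then obtain e where "e \<in> upper_edges \<union> lower_edges" "y \<in> e" "z \<in> e"
      unfolding edge_rel_def by blast
    then have "vlevel y = vlevel z" by (rule vlevel_edge)
    with step.IH show ?case by simp
  qed simp
qed

lemma component_subset: "component x \<subseteq> insert x (upper \<union> lower)"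
proof
  fix y assume "y \<in> component x"
  then have "(x, y) \<in> (edge_rel (upper_edges \<union> lower_edges))\<^sup>*"
    by (simp add: component_def comp_rel_eq)
  then show "y \<in> insert x (upper \<union> lower)"
  proof (induction rule: rtrancl_induct)
    case (step y z)
    then obtain e where "e \<in> upper_edges \<union> lower_edges" "z \<in> e" unfolding edge_rel_def by blast
    then have "z \<in> \<Union>upper_edges \<union> \<Union>lower_edges" by blast
    then show ?case unfolding Union_upper_edges Union_lower_edges by blast
  qed simp
qed

lemma finite_component: "finite (component x)"
  using component_subset by (rule finite_subset) simp

lemma outer_subset_vertices: "outer \<subseteq> upper \<union> lower"
  unfolding outer_eq by blast

lemma component_subset_vertices: "x \<in> outer \<Longrightarrow> component x \<subseteq> upper \<union> lower"
  using component_subset outer_subset_vertices by blast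

lemma finite_edges: "finite (upper_edges \<union> lower_edges)"
  unfolding upper_edges_def lower_edges_def
  using embedded_pair_blocks(4)[OF pair_partition_q inj_top_emb]
    embedded_pair_blocks(4)[OF pair_partition_p inj_bot_emb] by blast

lemma card_edges: "\<forall>e\<in>upper_edges \<union> lower_edges. card e = 2"
  unfolding upper_edges_def lower_edges_def
  using embedded_pair_blocks(2)[OF pair_partition_q inj_top_emb]
    embedded_pair_blocks(2)[OF pair_partition_p inj_bot_emb] by blast

lemma component_Int_Union:
  assumes "E \<subseteq> upper_edges \<union> lower_edges"
  shows "component x \<inter> \<Union>E = \<Union>{e\<in>E. e \<subseteq> component x}"
proof (intro equalityI subsetI)
  fix z assume "z \<in> component x \<inter> \<Union>E"
  then obtain e where e: "e \<in> E" "z \<in> e" and "z \<in> component x" by blast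
  then have "e \<subseteq> component x" using edge_subset_component assms by blast
  with e show "z \<in> \<Union>{e\<in>E. e \<subseteq> component x}" by blast
qed blast

lemma card_component_Int_Union:
  assumes "E \<subseteq> upper_edges \<union> lower_edges" "disjoint E"
  shows "card (component x \<inter> \<Union>E) = 2 * card {e\<in>E. e \<subseteq> component x}"
proof -
  have sub: "{e\<in>E. e \<subseteq> component x} \<subseteq> upper_edges \<union> lower_edges" using assms(1) by blast
  have "card (\<Union>{e\<in>E. e \<subseteq> component x}) = 2 * card {e\<in>E. e \<subseteq> component x}"
    using finite_subset[OF sub finite_edges] pairwise_subset[OF assms(2)] card_edges sub
    by (intro card_Union_pairs) auto
  then show ?thesis using component_Int_Union[OF assms(1)] by simp
qed

lemma card_component_Int_upper:
  "card (component x \<inter> upper) = 2 * card {e\<in>upper_edges. e \<subseteq> component x}"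
  using embedded_pair_blocks(1)[OF pair_partition_q inj_top_emb] Union_upper_edges
    card_component_Int_Union[of upper_edges]
  unfolding upper_edges_def by simp

lemma card_component_Int_lower:
  "card (component x \<inter> lower) = 2 * card {e\<in>lower_edges. e \<subseteq> component x}"
  using embedded_pair_blocks(1)[OF pair_partition_p inj_bot_emb] Union_lower_edges
    card_component_Int_Union[of lower_edges]
  unfolding lower_edges_def by simp

lemma card_component_le:
  "card (component x) \<le>
    card {e\<in>upper_edges. e \<subseteq> component x} + card {e\<in>lower_edges. e \<subseteq> component x} + 1"
proof -
  have "card (component x) \<le> card {e\<in>upper_edges \<union> lower_edges. e \<subseteq> component x} + 1"
    unfolding component_def comp_rel_eq by (rule card_component_le_edges[OF finite_edges card_edges])
  also have "{e\<in>upper_edges \<union> lower_edges. e \<subseteq> component x} =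
      {e\<in>upper_edges. e \<subseteq> component x} \<union> {e\<in>lower_edges. e \<subseteq> component x}" by blast
  finally show ?thesis using card_Un_le by (meson add_le_mono1 le_trans)
qed

text \<open>A component \<open>C\<close> has at most one vertex more than edges, and both \<open>C \<inter> upper\<close> and
  \<open>C \<inter> lower\<close> are unions of disjoint edges. Hence
  \<open>|C \<inter> outer| = |C \<inter> upper| + |C \<inter> lower| - 2 |C \<inter> upper \<inter> lower|\<close> is even and at most \<open>2\<close>.\<close>
lemma card_component_outer:
  assumes x: "x \<in> outer"
  shows "card (component x \<inter> outer) = 2"
proof -
  let ?C = "component x" and ?m = "card (component x \<inter> upper \<inter> lower)"
  have CV: "?C \<subseteq> upper \<union> lower" using component_subset_vertices[OF x] .
  have "card (?C \<inter> upper) + card (?C \<inter> lower) =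
      card ((?C \<inter> upper) \<union> (?C \<inter> lower)) + card ((?C \<inter> upper) \<inter> (?C \<inter> lower))"
    using finite_component by (intro card_Un_Int) auto
  also have "(?C \<inter> upper) \<union> (?C \<inter> lower) = ?C" using CV by blast
  also have "(?C \<inter> upper) \<inter> (?C \<inter> lower) = ?C \<inter> upper \<inter> lower" by blast
  finally have "card ?C + ?m = card (?C \<inter> upper) + card (?C \<inter> lower)" by simp
  moreover have "card (?C \<inter> outer) + ?m = card ?C"
  proof -
    have "?C \<inter> outer = ?C - (?C \<inter> upper \<inter> lower)" using CV unfolding outer_eq by blast
    moreover have sub: "?C \<inter> upper \<inter> lower \<subseteq> ?C" by blast
    ultimately show ?thesis
      using card_Diff_subset[OF finite_subset[OF sub finite_component] sub]
        card_mono[OF finite_component sub] by simp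
  qed
  moreover have "card (?C \<inter> outer) \<noteq> 0"
    using x component_refl[of x] finite_component[of x] by auto
  ultimately show ?thesis
    using card_component_le[of x] card_component_Int_upper[of x] card_component_Int_lower[of x]
    by presburger
qed

lemma upper_Diff_lower: "upper - lower = {T i | i. i < length (ucol q)}"
  and upper_Int_lower: "upper \<inter> lower = {M j | j. j < length (ucol p)}"
  and lower_Diff_upper: "lower - upper = {Bt j | j. j < length (lcol p)}"
  unfolding upper_eq lower_eq by auto

lemma sum_color_sign_component_upper:
  "(\<Sum>z\<in>component x \<inter> upper. color_sign (vcolor z)) = 0"
proof -
  have "(\<Sum>z\<in>\<Union>{e\<in>upper_edges. e \<subseteq> component x}. color_sign (vcolor z)) = 0"
    by (rule sum_Union_embedded_blocks[OF leveled_q inj_top_emb])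
      (auto simp: upper_edges_def vcolor_top_emb)
  then show ?thesis using component_Int_Union[of upper_edges] Union_upper_edges by simp
qed

lemma sum_color_sign_component_lower:
  "(\<Sum>z\<in>component x \<inter> lower. color_sign (ncol p (from_bot z))) = 0"
proof -
  have "(\<Sum>z\<in>\<Union>{e\<in>lower_edges. e \<subseteq> component x}. color_sign (ncol p (from_bot z))) = 0"
    by (rule sum_Union_embedded_blocks[OF leveled_p inj_bot_emb]) (auto simp: lower_edges_def)
  then show ?thesis using component_Int_Union[of lower_edges] Union_lower_edges by simp
qed

lemma sum_color_sign_component_outer:
  "(\<Sum>z\<in>component x \<inter> outer. color_sign (vcolor z)) = 0"
proof -
  let ?C = "component x"
  let ?v = "\<lambda>z. color_sign (vcolor z)" and ?w = "\<lambda>z. color_sign (ncol p (from_bot z))"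
  \<comment> \<open>A middle vertex carries opposite normalized colors in \<open>p\<close> and in \<open>q\<close>.\<close>
  have mid: "?w z = - ?v z" if "z \<in> upper \<inter> lower" for z
    using that middle unfolding upper_Int_lower by auto
  have bot: "?w z = ?v z" if "z \<in> lower - upper" for z
    using that unfolding lower_Diff_upper by auto
  have "?C \<inter> outer = (?C \<inter> upper - lower) \<union> (?C \<inter> lower - upper)"
    unfolding outer_eq by blast
  moreover have "sum ?v ((?C \<inter> upper - lower) \<union> (?C \<inter> lower - upper)) =
      sum ?v (?C \<inter> upper - lower) + sum ?v (?C \<inter> lower - upper)"
    using finite_component by (intro sum.union_disjoint) auto
  ultimately have "sum ?v (?C \<inter> outer) = sum ?v (?C \<inter> upper - lower) + sum ?v (?C \<inter> lower - upper)"
    by simp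
  also have "sum ?v (?C \<inter> lower - upper) = sum ?w (?C \<inter> lower - upper)"
    using bot by (intro sum.cong) auto
  also have "sum ?v (?C \<inter> upper - lower) = sum ?v (?C \<inter> upper) - sum ?v (?C \<inter> upper \<inter> lower)"
    using sum.Int_Diff[of "?C \<inter> upper" ?v lower] finite_component by simp
  also have "sum ?w (?C \<inter> lower - upper) = sum ?w (?C \<inter> lower) - sum ?w (?C \<inter> upper \<inter> lower)"
    using sum.Int_Diff[of "?C \<inter> lower" ?w upper] finite_component by (simp add: Int_ac)
  also have "sum ?w (?C \<inter> upper \<inter> lower) = - sum ?v (?C \<inter> upper \<inter> lower)"
    using mid by (simp add: sum_negf[symmetric])
  finally show ?thesis
    using sum_color_sign_component_upper sum_color_sign_component_lower by simp
qed

lemma vcolor_outer_pair: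
  assumes "component x \<inter> outer = {u, v}" "u \<noteq> v"
  shows "vcolor u \<noteq> vcolor v"
  using sum_color_sign_component_outer[of x] assms
  by (cases "vcolor u"; cases "vcolor v") auto

lemma inj_on_from_outer: "inj_on from_outer outer"
  by (auto simp: inj_on_def outer_pts_def)

lemma blocks_comp: "blocks (comp p q) = (\<lambda>x. from_outer ` (component x \<inter> outer)) ` outer"
  by (auto simp: comp_def component_def)

lemma points_comp: "points (comp p q) = from_outer ` outer"
proof (intro set_eqI iffI)
  fix y assume "y \<in> points (comp p q)"
  then show "y \<in> from_outer ` outer"
    by (cases y) (auto simp: points_def comp_def outer_pts_def intro: rev_image_eqI)
qed (auto simp: points_def comp_def outer_pts_def)

lemma ncol_comp: "z \<in> outer \<Longrightarrow> ncol (comp p q) (from_outer z) = vcolor z"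
  by (auto simp: outer_pts_def comp_def)

lemma level_comp: "z \<in> outer \<Longrightarrow> level (comp p q) (from_outer z) = vlevel z"
  by (auto simp: outer_pts_def comp_def)

lemma partition_on_outer: "partition_on outer ((\<lambda>x. component x \<inter> outer) ` outer)"
proof (rule partition_onI)
  show "\<Union>((\<lambda>x. component x \<inter> outer) ` outer) = outer"
    using component_refl by blast
  show "{} \<notin> (\<lambda>x. component x \<inter> outer) ` outer"
    using component_refl by blast
  fix S S' assume "S \<in> (\<lambda>x. component x \<inter> outer) ` outer" "S' \<in> (\<lambda>x. component x \<inter> outer) ` outer"
    and "S \<noteq> S'"
  then show "disjnt S S'" using component_disjoint unfolding disjnt_def by blast
qed

lemma leveled_comp: "leveled (comp p q)"
proof -
  have blocks: "blocks (comp p q) = (`) from_outer ` (\<lambda>x. component x \<inter> outer) ` outer"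
    unfolding blocks_comp by blast
  have "is_partition (comp p q)"
    unfolding is_partition_def points_comp blocks
    by (rule partition_on_inj_image_nonempty[OF partition_on_outer inj_on_from_outer])
  moreover have "\<forall>K\<in>blocks (comp p q). card K = 2"
    using card_component_outer inj_on_subset[OF inj_on_from_outer]
    by (auto simp: blocks_comp card_image)
  moreover have "ncol (comp p q) a \<noteq> ncol (comp p q) b \<and> level (comp p q) a = level (comp p q) b"
    if K: "K \<in> blocks (comp p q)" "a \<in> K" "b \<in> K" "a \<noteq> b" for K a b
  proof -
    obtain x u v where x: "x \<in> outer" and uv: "u \<in> component x \<inter> outer" "v \<in> component x \<inter> outer"
      and ab: "a = from_outer u" "b = from_outer v"
      using K(1-3) unfolding blocks_comp by blast
    then have "u \<noteq> v" using K(4) by blast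
    then have "component x \<inter> outer = {u, v}"
      by (rule card_2_eq_doubleton[OF card_component_outer[OF x] uv])
    then have "vcolor u \<noteq> vcolor v" using vcolor_outer_pair \<open>u \<noteq> v\<close> by blast
    moreover have "vlevel u = vlevel v"
      using vlevel_component[of u x] vlevel_component[of v x] uv by simp
    ultimately show ?thesis using uv ab by (simp add: ncol_comp level_comp)
  qed
  ultimately show ?thesis
    unfolding leveled_def is_pair_partition_def opposite_colored_def by blast
qed

lemma ppos_bot_emb: "ppos (bot_emb y) = pos p y"
  by (simp add: ppos_def)

lemma qpos_top_emb: "qpos (top_emb y) = pos q y"
  by (simp add: qpos_def)

text \<open>How the three cyclic orders compare on top (\<open>upper - lower\<close>), middle (\<open>upper \<inter> lower\<close>)
  and bottom (\<open>lower - upper\<close>) vertices: in \<open>p\<close> the bottom precedes the middle row, in \<open>q\<close> the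
  middle precedes the top row, the two factors traverse the middle row in opposite directions,
  and the composite puts the bottom before the top row.\<close>
lemma vertex_orders:
  shows "u \<in> lower - upper \<Longrightarrow> v \<in> upper \<inter> lower \<Longrightarrow> ppos u < ppos v"
    and "u \<in> upper \<inter> lower \<Longrightarrow> v \<in> lower - upper \<Longrightarrow> \<not> ppos u < ppos v"
    and "u \<in> upper \<inter> lower \<Longrightarrow> v \<in> upper - lower \<Longrightarrow> qpos u < qpos v"
    and "u \<in> upper - lower \<Longrightarrow> v \<in> upper \<inter> lower \<Longrightarrow> \<not> qpos u < qpos v"
    and "u \<in> upper \<inter> lower \<Longrightarrow> v \<in> upper \<inter> lower \<Longrightarrow> u \<noteq> v \<Longrightarrow>
      ppos u < ppos v \<longleftrightarrow> \<not> qpos u < qpos v"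
    and "u \<in> lower - upper \<Longrightarrow> v \<in> upper - lower \<Longrightarrow> rpos u < rpos v"
    and "u \<in> upper - lower \<Longrightarrow> v \<in> lower - upper \<Longrightarrow> \<not> rpos u < rpos v"
    and "u \<in> lower - upper \<Longrightarrow> v \<in> lower - upper \<Longrightarrow> rpos u < rpos v \<longleftrightarrow> ppos u < ppos v"
    and "u \<in> upper - lower \<Longrightarrow> v \<in> upper - lower \<Longrightarrow> rpos u < rpos v \<longleftrightarrow> qpos u < qpos v"
  unfolding upper_Diff_lower upper_Int_lower lower_Diff_upper
  by (auto simp: ppos_def qpos_def rpos_def comp_def middle)

definition top_part :: "cpt \<Rightarrow> cpt set" where
  "top_part x = component x \<inter> (upper - lower)"

definition mid_part :: "cpt \<Rightarrow> cpt set" where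
  "mid_part x = component x \<inter> (upper \<inter> lower)"

definition bot_part :: "cpt \<Rightarrow> cpt set" where
  "bot_part x = component x \<inter> (lower - upper)"

lemmas parts_def = top_part_def mid_part_def bot_part_def

lemma component_Int_outer: "component x \<inter> outer = top_part x \<union> bot_part x"
  and component_Int_lower: "component x \<inter> lower = mid_part x \<union> bot_part x"
  and component_Int_upper: "component x \<inter> upper = top_part x \<union> mid_part x"
  unfolding parts_def outer_eq by blast+

lemma finite_parts: "finite (top_part x)" "finite (mid_part x)" "finite (bot_part x)"
  unfolding parts_def using finite_component by auto

lemma disjoint_parts: "top_part x \<inter> bot_part x = {}" "mid_part x \<inter> bot_part x = {}"
    "top_part x \<inter> mid_part x = {}"
  unfolding parts_def by blast+

abbreviation pcount :: "cpt set \<Rightarrow> cpt set \<Rightarrow> nat" where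
  "pcount \<equiv> pair_count (\<lambda>u v. ppos u < ppos v)"

abbreviation qcount :: "cpt set \<Rightarrow> cpt set \<Rightarrow> nat" where
  "qcount \<equiv> pair_count (\<lambda>u v. qpos u < qpos v)"

abbreviation rcount :: "cpt set \<Rightarrow> cpt set \<Rightarrow> nat" where
  "rcount \<equiv> pair_count (\<lambda>u v. rpos u < rpos v)"

lemma rcount_outer:
  "rcount (component x \<inter> outer) (component y \<inter> outer) = qcount (top_part x) (top_part y)
    + card (bot_part x) * card (top_part y) + pcount (bot_part x) (bot_part y)"
proof -
  have "rcount (top_part x) (top_part y) = qcount (top_part x) (top_part y)"
    using vertex_orders(9) by (intro pair_count_cong) (auto simp: parts_def)
  moreover have "rcount (top_part x) (bot_part y) = 0"
    using vertex_orders(7) by (intro pair_count_none) (auto simp: parts_def)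
  moreover have "rcount (bot_part x) (top_part y) = card (bot_part x) * card (top_part y)"
    using vertex_orders(6) by (intro pair_count_all) (auto simp: parts_def)
  moreover have "rcount (bot_part x) (bot_part y) = pcount (bot_part x) (bot_part y)"
    using vertex_orders(8) by (intro pair_count_cong) (auto simp: parts_def)
  ultimately show ?thesis
    unfolding component_Int_outer
    using pair_count_Un[OF finite_parts(1,3) finite_parts(1,3) disjoint_parts(1) disjoint_parts(1)]
    by simp
qed

lemma pcount_lower:
  "pcount (component x \<inter> lower) (component y \<inter> lower) = pcount (mid_part x) (mid_part y)
    + card (bot_part x) * card (mid_part y) + pcount (bot_part x) (bot_part y)"
proof -
  have "pcount (mid_part x) (bot_part y) = 0"
    using vertex_orders(2) by (intro pair_count_none) (auto simp: parts_def)
  moreover have "pcount (bot_part x) (mid_part y) = card (bot_part x) * card (mid_part y)"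
    using vertex_orders(1) by (intro pair_count_all) (auto simp: parts_def)
  ultimately show ?thesis
    unfolding component_Int_lower
    using pair_count_Un[OF finite_parts(2,3) finite_parts(2,3) disjoint_parts(2) disjoint_parts(2)]
    by simp
qed

lemma qcount_upper:
  "qcount (component x \<inter> upper) (component y \<inter> upper) = qcount (top_part x) (top_part y)
    + card (mid_part x) * card (top_part y) + qcount (mid_part x) (mid_part y)"
proof -
  have "qcount (top_part x) (mid_part y) = 0"
    using vertex_orders(4) by (intro pair_count_none) (auto simp: parts_def)
  moreover have "qcount (mid_part x) (top_part y) = card (mid_part x) * card (top_part y)"
    using vertex_orders(3) by (intro pair_count_all) (auto simp: parts_def)
  ultimately show ?thesis
    unfolding component_Int_upper
    using pair_count_Un[OF finite_parts(1,2) finite_parts(1,2) disjoint_parts(3) disjoint_parts(3)]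
    by simp
qed

lemma pcount_qcount_mid:
  assumes "component x \<inter> component y = {}"
  shows "pcount (mid_part x) (mid_part y) + qcount (mid_part x) (mid_part y)
    = card (mid_part x) * card (mid_part y)"
proof (rule pair_count_complement)
  fix u v assume "u \<in> mid_part x" "v \<in> mid_part y"
  then have "u \<in> upper \<inter> lower" "v \<in> upper \<inter> lower" "u \<noteq> v"
    using assms unfolding parts_def by blast+
  then show "ppos u < ppos v \<longleftrightarrow> \<not> qpos u < qpos v" by (rule vertex_orders(5))
qed

text \<open>Splitting both components into top, middle and bottom vertices, the three counts add up to
  twice an integer plus \<open>|C\<^sub>1 \<inter> lower| \<cdot> |C\<^sub>2 \<inter> upper|\<close>, and \<open>C\<^sub>1 \<inter> lower\<close> is a union of
  disjoint edges.\<close>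
lemma crossing_parity:
  assumes "component x \<inter> component y = {}"
  shows "even (rcount (component x \<inter> outer) (component y \<inter> outer)
    + pcount (component x \<inter> lower) (component y \<inter> lower)
    + qcount (component x \<inter> upper) (component y \<inter> upper))"
proof -
  have "card (mid_part x) + card (bot_part x) = 2 * card {e\<in>lower_edges. e \<subseteq> component x}"
    using card_component_Int_lower[of x] card_Un_disjoint[OF finite_parts(2,3) disjoint_parts(2)]
    unfolding component_Int_lower by simp
  moreover have "rcount (component x \<inter> outer) (component y \<inter> outer)
      + pcount (component x \<inter> lower) (component y \<inter> lower)
      + qcount (component x \<inter> upper) (component y \<inter> upper)
    = 2 * (qcount (top_part x) (top_part y) + pcount (bot_part x) (bot_part y))
      + (card (mid_part x) + card (bot_part x)) * (card (top_part y) + card (mid_part y))"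
    unfolding rcount_outer pcount_lower qcount_upper distrib_left distrib_right
    using pcount_qcount_mid[OF assms] by linarith
  ultimately show ?thesis by simp
qed

lemma level_gap_if_odd_component_parts:
  assumes lv: "leveled P" and gaps: "crossing_gaps_avoid D P" and inj: "inj f"
    and pos: "\<And>y. \<rho> (f y) = pos P y" and lev: "\<And>y. vlevel (f y) = level P y"
    and E: "E = (`) f ` blocks P" "E \<subseteq> upper_edges \<union> lower_edges"
    and disj: "component x \<inter> component y = {}"
    and odd: "odd (pair_count (\<lambda>u v. \<rho> u < \<rho> v) (component x \<inter> \<Union>E) (component y \<inter> \<Union>E))"
  shows "nat \<bar>vlevel y - vlevel x\<bar> \<notin> D"
proof -
  have pp: "is_pair_partition P" using lv by (rule leveled_pair_partition)
  have sub: "{e\<in>E. e \<subseteq> component z} \<subseteq> (`) f ` blocks P" for z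
    using E(1) by blast
  have "odd (pair_count (\<lambda>u v. \<rho> u < \<rho> v)
      (\<Union>{e\<in>E. e \<subseteq> component x}) (\<Union>{e\<in>E. e \<subseteq> component y}))"
    using odd unfolding component_Int_Union[OF E(2)] .
  then obtain K L where K: "K \<in> blocks P" and L: "L \<in> blocks P"
    and "f ` K \<in> {e\<in>E. e \<subseteq> component x}" "f ` L \<in> {e\<in>E. e \<subseteq> component y}"
    and odd_KL: "odd (pair_count (precedes P) K L)"
    by (rule odd_pair_count_embedded_blocksE[OF pp inj pos sub sub])
  then have sub_x: "f ` K \<subseteq> component x" and sub_y: "f ` L \<subseteq> component y" by simp_all
  obtain a where a: "a \<in> K" using pair_block_nonemptyE[OF pp K] .
  obtain c where c: "c \<in> L" using pair_block_nonemptyE[OF pp L] .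
  have "K \<noteq> L" using a sub_x sub_y disj by blast
  moreover have "level P a = vlevel x" "level P c = vlevel y"
    using vlevel_component[of "f a" x] vlevel_component[of "f c" y] sub_x sub_y a c
    by (auto simp: lev)
  ultimately show ?thesis using crossing_gaps_avoidD[OF gaps K L _ odd_KL a c] by simp
qed

lemma crossing_gaps_avoid_comp:
  assumes gp: "crossing_gaps_avoid D p" and gq: "crossing_gaps_avoid D q"
  shows "crossing_gaps_avoid D (comp p q)"
proof (rule crossing_gaps_avoidI[OF leveled_comp])
  fix K1 K2 assume K: "K1 \<in> blocks (comp p q)" "K2 \<in> blocks (comp p q)" "K1 \<noteq> K2"
    and odd: "odd (pair_count (precedes (comp p q)) K1 K2)"
  obtain x y where x: "x \<in> outer" and y: "y \<in> outer"
    and K_eq: "K1 = from_outer ` (component x \<inter> outer)" "K2 = from_outer ` (component y \<inter> outer)"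
    using K(1,2) unfolding blocks_comp by blast
  then have disj: "component x \<inter> component y = {}" using K(3) component_disjoint by metis
  have inj: "inj_on from_outer (component z \<inter> outer)" for z
    using inj_on_subset[OF inj_on_from_outer] by blast
  have "pair_count (precedes (comp p q)) K1 K2 = rcount (component x \<inter> outer) (component y \<inter> outer)"
    unfolding K_eq pair_count_image_left[OF inj] pair_count_image_right[OF inj]
    by (simp add: rpos_def)
  then consider "odd (pcount (component x \<inter> \<Union>lower_edges) (component y \<inter> \<Union>lower_edges))"
    | "odd (qcount (component x \<inter> \<Union>upper_edges) (component y \<inter> \<Union>upper_edges))"
    using crossing_parity[OF disj] odd unfolding Union_lower_edges Union_upper_edges by fastforce
  then have "nat \<bar>vlevel y - vlevel x\<bar> \<notin> D"
  proof cases
    case 1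
    then show ?thesis
      by (rule level_gap_if_odd_component_parts[OF leveled_p gp inj_bot_emb ppos_bot_emb
            vlevel_bot_emb lower_edges_def Un_upper2 disj])
  next
    case 2
    then show ?thesis
      by (rule level_gap_if_odd_component_parts[OF leveled_q gq inj_top_emb qpos_top_emb
            vlevel_top_emb upper_edges_def Un_upper1 disj])
  qed
  moreover have "from_outer x \<in> K1" "from_outer y \<in> K2"
    using x y component_refl unfolding K_eq by blast+
  ultimately show "\<exists>a\<in>K1. \<exists>c\<in>K2. nat \<bar>level (comp p q) c - level (comp p q) a\<bar> \<notin> D"
    using level_comp[OF x] level_comp[OF y] by metis
qed

end

lemma comp_in_I_D:
  assumes "p \<in> I_D D" "q \<in> I_D D" "lcol q = ucol p"
  shows "comp p q \<in> I_D D"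
proof -
  interpret composable p q
    using assms by unfold_locales (simp_all add: I_D_iff)
  show ?thesis
    using assms leveled_comp crossing_gaps_avoid_comp by (simp add: I_D_iff)
qed

theorem theorem1:
  fixes D :: "nat set"
  assumes "subsemigroup D"
  shows "category_of_partitions (I_D D)"
  unfolding category_of_partitions_def
proof (intro conjI ballI impI)
  fix r assume "r \<in> I_D D"
  then show "is_partition r" unfolding I_D_iff using leveled_partition by blast
qed (simp_all add: tensor_in_I_D comp_in_I_D invol_in_I_D id_part_in_I_D pair_part_in_I_D)

end
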